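(* Let $q_0,p_0,s_0,s,r\in(0,\infty)$ and $r_0,q,p\in(0,\infty]$ satisfy $$\frac1q-\frac1{q_0}=\frac1p-\frac1{p_0}=\frac1s-\frac1{s_0}=\frac1{r_0}-\frac1r<0 .$$ Let $w$ be a weight on $\Omega$ with $[w]_{(s,r)}<\infty$. Assume: (1) there is a function $c:(1,\infty]\to[1,\infty)$ such that $\|\mathcal M\|_{L^t_v(\Omega)\to L^t_v(\Omega)}\le c(t)[v]_t^{t'}$ for all $t\in(1,\infty]$ and all weights $v$ on $\Omega$; (2) there are a set $V$, a map $S:V\to L^0(\Omega)$, a map $$T:\bigcup_{w_0:\,[w_0]_{(s_0,r_0)}<\infty} S^{-1}\big(L^{p_0}_{w_0}(\Omega)\big)\to L^0(\Omega)$$ (union over all weights $w_0$ with $[w_0]_{(s_0,r_0)}<\infty$), and an increasing function $\phi:\mathbb R\to\mathbb R$ such that for every weight $w_0$ with $[w_0]_{(s_0,r_0)}<\infty$ and every $f\in S^{-1}(L^{p_0}_{w_0}(\Omega))$, $$\|Tf\|_{L^{q_0}_{w_0}(\Omega)}\le \phi([w_0]_{(s_0,r_0)})\,\|Sf\|_{L^{p_0}_{w_0}(\Omega)}.$$ Then $S^{-1}(L^p_w(\Omega))$ is contained in the domain of $T$, and for every $\kappa\in(1,\infty)$ and every $f\in S^{-1}(L^p_w(\Omega))$, $$\|Tf\|_{L^q_w(\Omega)}\le \kappa^{\beta}\,\phi\Big((\kappa' c(t))^{\beta}[w]_{(s,r)}^{s/s_0}\Big)\,\|Sf\|_{L^p_w(\Omega)},$$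 where $t:=(\frac1s+\frac1r)/\frac1r$ and $\beta:=(\frac1s+\frac1r)(\frac1r-\frac1{r_0})/\frac1r$.
   Context: $(\Omega,\mu)$ is a $\sigma$-finite measure space with a fixed basis of sets $\mathcal U$: a countable collection of measurable sets $U$ with $0<\mu(U)<\infty$ such that $\bigcup_{U\in\mathcal U}U=\Omega$ and for all $x,y\in\Omega$ there is $U\in\mathcal U$ with $x,y\in U$. A weight is a measurable function $w:\Omega\to(0,\infty)$. $L^0(\Omega)$ denotes the measurable functions on $\Omega$. For $p\in(0,\infty]$ and a weight $w$, $L^p_w(\Omega)$ is the space of measurable $f$ with $\|f\|_{L^p_w(\Omega)}:=\|fw\|_{L^p(\Omega)}<\infty$ (the weight multiplies the function, not the measure). For $s,r\in(0,\infty]$ and weights $w,v$, $$[w,v]_{(s,r)}:=\sup_{U\in\mathcal U}\mu(U)^{-\frac1s-\frac1r}\|w\|_{L^s(U)}\|v^{-1}\|_{L^r(U)}\quad(\tfrac1\infty:=0),$$ $[w]_{(s,r)}:=[w,w]_{(s,r)}$, and for $p\in[1,\infty]$, $[w,v]_p:=[w,v]_{(p,p')}$, $[w]_p:=[w,w]_p$, where $p'$ is the Hölder conjugate exponent. The maximal operator is $\mathcal Mf:=\sup_{U\in\mathcal U}\mu(U)^{-1}\|f\|_{L^1(U)}\mathbf 1_U$. For $\kappa\in(1,\infty)$, $\kappa'=\kappa/(\kappa-1)$. $\|\mathcal M\|_{X\to Y}$ denotes $\sup\{\|\mathcal Mf\|_Y:\|f\|_X\le1\}$. *)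

theory Defs
  imports "HOL-Probability.Probability"
begin

definition inv_exp :: "ereal \<Rightarrow> real" where
  "inv_exp p = (if p = \<infinity> then 0 else 1 / real_of_ereal p)"

definition conj_exp :: "ereal \<Rightarrow> ereal" where
  "conj_exp p = (if p = \<infinity> then 1 else if p = 1 then \<infinity>
                 else ereal (real_of_ereal p / (real_of_ereal p - 1)))"

definition epowr :: "ennreal \<Rightarrow> real \<Rightarrow> ennreal" where
  "epowr x a = (if x = \<top> then \<top> else ennreal (enn2real x powr a))"

definition Lp_norm :: "'a measure \<Rightarrow> ereal \<Rightarrow> ('a \<Rightarrow> ennreal) \<Rightarrow> ennreal" where
  "Lp_norm M p g = (if p = \<infinity> then esssup M g
     else epowr (\<integral>\<^sup>+ x. epowr (g x) (real_of_ereal p) \<partial>M) (1 / real_of_ereal p))"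

definition wnorm :: "'a measure \<Rightarrow> ereal \<Rightarrow> ('a \<Rightarrow> real) \<Rightarrow> ('a \<Rightarrow> real) \<Rightarrow> ennreal" where
  "wnorm M p w f = Lp_norm M p (\<lambda>x. ennreal (\<bar>f x\<bar> * w x))"

definition Lpw :: "'a measure \<Rightarrow> ereal \<Rightarrow> ('a \<Rightarrow> real) \<Rightarrow> ('a \<Rightarrow> real) set" where
  "Lpw M p w = {f. f \<in> borel_measurable M \<and> wnorm M p w f < \<top>}"

definition is_weight :: "'a measure \<Rightarrow> ('a \<Rightarrow> real) \<Rightarrow> bool" where
  "is_weight M w \<longleftrightarrow> w \<in> borel_measurable M \<and> (\<forall>x\<in>space M. 0 < w x)"

definition is_basis :: "'a measure \<Rightarrow> 'a set set \<Rightarrow> bool" where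
  "is_basis M \<U> \<longleftrightarrow> countable \<U> \<and>
     (\<forall>U\<in>\<U>. U \<in> sets M \<and> 0 < emeasure M U \<and> emeasure M U < \<infinity>) \<and>
     \<Union>\<U> = space M \<and>
     (\<forall>x\<in>space M. \<forall>y\<in>space M. \<exists>U\<in>\<U>. x \<in> U \<and> y \<in> U)"

definition apc :: "'a measure \<Rightarrow> 'a set set \<Rightarrow> ereal \<Rightarrow> ereal \<Rightarrow> ('a \<Rightarrow> real) \<Rightarrow> ('a \<Rightarrow> real) \<Rightarrow> ennreal" where
  "apc M \<U> s r w v = (SUP U\<in>\<U>.
      ennreal (measure M U powr (- inv_exp s - inv_exp r))
      * Lp_norm (restrict_space M U) s (\<lambda>x. ennreal (w x))
      * Lp_norm (restrict_space M U) r (\<lambda>x. ennreal (1 / v x)))"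

definition apc_p :: "'a measure \<Rightarrow> 'a set set \<Rightarrow> ereal \<Rightarrow> ('a \<Rightarrow> real) \<Rightarrow> ennreal" where
  "apc_p M \<U> p w = apc M \<U> p (conj_exp p) w w"

definition maxop :: "'a measure \<Rightarrow> 'a set set \<Rightarrow> ('a \<Rightarrow> real) \<Rightarrow> 'a \<Rightarrow> ennreal" where
  "maxop M \<U> f x = (SUP U\<in>{U\<in>\<U>. x \<in> U}.
      ennreal (1 / measure M U) * (\<integral>\<^sup>+ y\<in>U. ennreal \<bar>f y\<bar> \<partial>M))"

definition maxop_norm :: "'a measure \<Rightarrow> 'a set set \<Rightarrow> ereal \<Rightarrow> ('a \<Rightarrow> real) \<Rightarrow> ennreal" where
  "maxop_norm M \<U> t v = (SUP f\<in>{f. f \<in> borel_measurable M \<and> wnorm M t v f \<le> 1}.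
      Lp_norm M t (\<lambda>x. maxop M \<U> f x * ennreal (v x)))"

end

theory Submission
  imports Defs
begin

text \<open>Put \<delta> = 1/r - 1/r0, so that 1/q = 1/q0 - \<delta>, 1/p = 1/p0 - \<delta> and
  1/s0 = 1/s + \<delta>, and \<rho> = 1/(1/s + 1/r).  The condition on w says that w^(-\<rho>) is an A_t
  weight with [w^(-\<rho>)]_t \<le> [w]_(s,r)^\<rho>, so the maximal operator has norm at most
  B = c(t) [w]_(s,r)^s on L^t with weight w^(-\<rho>).  By duality, the L^q_w norm of T f is
  approached by the L^q0 norms of T f w u with \<parallel>u\<parallel>_(1/\<delta>) \<le> 1.  The Rubio de Francia iteration
  V = \<Sum>_k M^k H / (\<kappa>' B)^k of H = u^(1/\<beta>) w^\<rho> satisfies H \<le> V, M V \<le> \<kappa>' B V and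
  \<parallel>V w^(-\<rho>)\<parallel>_t \<le> \<kappa> \<parallel>H w^(-\<rho>)\<parallel>_t.  Then U = (V w^(-\<rho>))^\<beta> dominates u, \<parallel>U\<parallel>_(1/\<delta>) \<le> \<kappa>^\<beta>,
  and the A_1 property of V together with Hoelder's inequality gives
  [w U]_(s0,r0) \<le> (\<kappa>' B)^\<beta> [w]_(s,r)^(r/r0).  The hypothesis for the weight w U and
  \<parallel>S f\<parallel>_(L^p0_(w U)) \<le> \<parallel>S f\<parallel>_(L^p_w) \<parallel>U\<parallel>_(1/\<delta>) complete the proof.\<close>

section \<open>Powers and $L^p$ norms of nonnegative functions\<close>
lemma epowr_top [simp]: "epowr \<top> a = \<top>"
  by (simp add: epowr_def)

lemma epowr_ennreal [simp]: "0 \<le> c \<Longrightarrow> epowr (ennreal c) a = ennreal (c powr a)"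
  by (simp add: epowr_def)

lemma epowr_0 [simp]: "epowr 0 a = 0"
  by (simp add: epowr_def)

lemma epowr_one [simp]: "epowr x 1 = x"
  by (cases x) (auto simp: epowr_def)

lemma epowr_one_eq_one [simp]: "epowr 1 a = 1"
  by (simp add: epowr_def)

lemma epowr_eq_top_iff [simp]: "epowr x a = \<top> \<longleftrightarrow> x = \<top>"
  by (cases x) (auto simp: epowr_def)

lemma epowr_less_top_iff [simp]: "epowr x a < \<top> \<longleftrightarrow> x < \<top>"
  by (metis epowr_eq_top_iff less_top)

lemma epowr_eq_0_iff [simp]: "epowr x a = 0 \<longleftrightarrow> x = 0"
  by (cases x) (auto simp: epowr_def)

lemma epowr_mono: "x \<le> y \<Longrightarrow> 0 \<le> a \<Longrightarrow> epowr x a \<le> epowr y a"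
  by (cases x; cases y) (auto simp: epowr_def top_unique intro!: powr_mono2 ennreal_leI)

lemma epowr_epowr: "epowr (epowr x a) b = epowr x (a * b)"
  by (cases x) (auto simp: epowr_def powr_powr)

lemma epowr_epowr_inverse [simp]: "a \<noteq> 0 \<Longrightarrow> epowr (epowr x a) (1 / a) = x"
  by (cases x) (auto simp: epowr_def powr_powr)

lemma epowr_inverse_epowr [simp]: "a \<noteq> 0 \<Longrightarrow> epowr (epowr x (1 / a)) a = x"
  by (cases x) (auto simp: epowr_def powr_powr)

lemma epowr_mult: "0 < a \<Longrightarrow> epowr (x * y) a = epowr x a * epowr y a"
  by (cases x; cases y)
    (auto simp: epowr_def ennreal_mult[symmetric] powr_mult ennreal_mult_top ennreal_top_mult)

lemma epowr_le_iff:
  assumes "0 < a"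
  shows "epowr x a \<le> epowr y a \<longleftrightarrow> x \<le> y"
proof
  assume "epowr x a \<le> epowr y a"
  then have "epowr (epowr x a) (1/a) \<le> epowr (epowr y a) (1/a)"
    by (rule epowr_mono) (use assms in simp)
  then show "x \<le> y"
    using assms by simp
qed (use assms in \<open>simp add: epowr_mono\<close>)

lemma epowr_less_iff: "0 < a \<Longrightarrow> epowr x a < epowr y a \<longleftrightarrow> x < y"
  by (simp add: epowr_le_iff flip: not_le)

lemma measurable_epowr [measurable]:
  assumes [measurable]: "f \<in> borel_measurable M"
  shows "(\<lambda>x. epowr (f x) a) \<in> borel_measurable M"
  unfolding epowr_def by measurable

lemma inv_exp_ereal [simp]: "inv_exp (ereal x) = 1 / x"
  by (simp add: inv_exp_def)

lemma inv_exp_infinity [simp]: "inv_exp \<infinity> = 0"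
  by (simp add: inv_exp_def)

lemma inv_exp_nonneg: "0 < p \<Longrightarrow> 0 \<le> inv_exp p"
  by (cases p) (auto simp: inv_exp_def)

lemma enn2ereal_le_neg_mult:
  assumes le: "enn2ereal A \<le> ereal c * enn2ereal B" and c: "c < 0"
  shows "A = 0" "B = 0"
proof -
  show B: "B = 0"
  proof (rule ccontr)
    assume "B \<noteq> 0"
    then have "0 < enn2ereal B"
      by (metis less_ennreal.rep_eq zero_ennreal.rep_eq zero_less_iff_neq_zero)
    then have "ereal c * enn2ereal B < 0"
      using c by (cases "enn2ereal B") (auto simp: mult_neg_pos)
    with le enn2ereal_nonneg[of A] show False
      by (meson less_le_trans not_less order_trans)
  qed
  have "enn2ereal A \<le> enn2ereal 0"
    using le unfolding B by (simp add: zero_ennreal.rep_eq)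
  then have "A \<le> 0"
    by (simp only: less_eq_ennreal.rep_eq)
  then show "A = 0"
    by simp
qed

lemma Lp_norm_ereal: "Lp_norm N (ereal p) f = epowr (\<integral>\<^sup>+x. epowr (f x) p \<partial>N) (1 / p)"
  by (simp add: Lp_norm_def)

lemma Lp_norm_one: "Lp_norm N (ereal 1) f = (\<integral>\<^sup>+x. f x \<partial>N)"
  by (simp add: Lp_norm_ereal)

lemma Lp_norm_cong:
  "(\<And>x. x \<in> space N \<Longrightarrow> f x = g x) \<Longrightarrow> Lp_norm N (ereal p) f = Lp_norm N (ereal p) g"
  unfolding Lp_norm_ereal by (metis (mono_tags, lifting) nn_integral_cong)

lemma Lp_norm_mono_AE:
  "AE x in N. f x \<le> g x \<Longrightarrow> 0 \<le> p \<Longrightarrow> Lp_norm N (ereal p) f \<le> Lp_norm N (ereal p) g"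
  unfolding Lp_norm_ereal
  by (intro epowr_mono nn_integral_mono_AE) (auto elim!: eventually_mono intro: epowr_mono)

lemma Lp_norm_mono:
  "(\<And>x. x \<in> space N \<Longrightarrow> f x \<le> g x) \<Longrightarrow> 0 \<le> p \<Longrightarrow> Lp_norm N (ereal p) f \<le> Lp_norm N (ereal p) g"
  by (intro Lp_norm_mono_AE) auto

lemma Lp_norm_cong_AE:
  "AE x in N. f x = g x \<Longrightarrow> 0 \<le> p \<Longrightarrow> Lp_norm N (ereal p) f = Lp_norm N (ereal p) g"
  by (intro antisym Lp_norm_mono_AE) (auto elim!: eventually_mono)

lemma Lp_norm_cmult:
  assumes "f \<in> borel_measurable N" "0 < p"
  shows "Lp_norm N (ereal p) (\<lambda>x. c * f x) = c * Lp_norm N (ereal p) f"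
  using assms by (simp add: Lp_norm_ereal epowr_mult nn_integral_cmult epowr_epowr)

lemma Lp_norm_eq_0_iff:
  assumes "f \<in> borel_measurable N" "0 < p"
  shows "Lp_norm N (ereal p) f = 0 \<longleftrightarrow> (AE x in N. f x = 0)"
  using assms by (simp add: Lp_norm_ereal nn_integral_0_iff_AE)

lemma Lp_norm_eq_0_if_AE:
  assumes "AE x in N. f x = 0" "f \<in> borel_measurable N" "0 < p"
  shows "Lp_norm N p f = 0"
proof (cases p)
  case PInf
  have "esssup N f \<le> 0"
    using assms by (intro esssup_I) (auto elim!: eventually_mono)
  then show ?thesis
    using PInf by (simp add: Lp_norm_def)
qed (use assms Lp_norm_eq_0_iff in auto)

lemma Lp_norm_epowr:
  assumes "0 < a" "0 < \<theta>"
  shows "Lp_norm N (ereal a) (\<lambda>x. epowr (f x) \<theta>) = epowr (Lp_norm N (ereal (a * \<theta>)) f) \<theta>"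
  using assms by (simp add: Lp_norm_ereal epowr_epowr mult.commute)

lemma Lp_norm_indicator:
  assumes "Q \<in> sets M" "0 < p"
  shows "Lp_norm M (ereal p) (\<lambda>x. ennreal (indicator Q x)) = epowr (emeasure M Q) (1/p)"
proof -
  have "epowr (ennreal (indicator Q x)) p = indicator Q x" for x
    using assms(2) by (cases "x \<in> Q") simp_all
  then show ?thesis
    unfolding Lp_norm_ereal by (simp only: nn_integral_indicator[OF assms(1)])
qed

lemma AE_less_top_if_Lp_norm_less_top:
  assumes "f \<in> borel_measurable N" "Lp_norm N (ereal p) f < \<top>"
  shows "AE x in N. f x < \<top>"
proof -
  have "(\<integral>\<^sup>+x. epowr (f x) p \<partial>N) \<noteq> \<infinity>"
    using assms(2) by (simp add: Lp_norm_ereal)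
  from nn_integral_PInf_AE[OF _ this] assms(1) show ?thesis
    by (auto elim!: eventually_mono simp: less_top)
qed

lemma AE_less_top_if_weighted_Lp_norm_less_top:
  assumes "f \<in> borel_measurable N" "v \<in> borel_measurable N" "\<And>x. x \<in> space N \<Longrightarrow> 0 < v x"
    and "Lp_norm N (ereal p) (\<lambda>x. f x * ennreal (v x)) < \<top>"
  shows "AE x in N. f x < \<top>"
proof -
  have "AE x in N. f x * ennreal (v x) < \<top>"
    using assms(1,2,4) by (intro AE_less_top_if_Lp_norm_less_top) auto
  with AE_space show ?thesis
    by eventually_elim (use assms(3) in \<open>force simp: ennreal_mult_less_top ennreal_eq_0_iff\<close>)
qed

lemma AE_imp_ex_in_set:
  assumes "AE x in M. x \<in> Q \<longrightarrow> P x" "Q \<in> sets M" "0 < emeasure M Q"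
  shows "\<exists>x\<in>Q. P x"
proof (rule ccontr)
  assume "\<not> ?thesis"
  then have "AE x in M. x \<notin> Q"
    using assms(1) by (auto elim!: eventually_mono)
  then show False
    using assms(2,3) by (simp add: AE_iff_null_sets[symmetric] null_setsD1)
qed

lemma wnorm_eq_0_imp_AE:
  assumes "wnorm M (ereal p) v f = 0" "is_weight M v" "f \<in> borel_measurable M" "0 < p"
  shows "AE x in M. f x = 0"
proof -
  have "AE x in M. ennreal (\<bar>f x\<bar> * v x) = 0"
    using assms by (subst Lp_norm_eq_0_iff[symmetric]) (auto simp: wnorm_def is_weight_def)
  with AE_space show ?thesis
    by eventually_elim (use assms(2) in \<open>auto simp: is_weight_def ennreal_eq_0_iff mult_le_0_iff\<close>)
qed

lemma wnorm_eq_0_if_AE: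
  assumes "AE x in M. f x = 0" "is_weight M v" "f \<in> borel_measurable M" "0 < p"
  shows "wnorm M p v f = 0"
  unfolding wnorm_def using assms by (intro Lp_norm_eq_0_if_AE) (auto elim!: eventually_mono simp: is_weight_def)

lemma wnorm_space_empty: "space M = {} \<Longrightarrow> 0 < p \<Longrightarrow> wnorm M p v f = 0"
  unfolding wnorm_def by (intro Lp_norm_eq_0_if_AE) (auto simp: measurable_def AE_iff_measurable)

section \<open>Hoelder and Jensen inequalities\<close>

lemma Youngs_inequality_scaled:
  fixes x y A B \<alpha> \<beta> :: real
  assumes "0 \<le> x" "0 \<le> y" "0 < A" "0 < B" "0 \<le> \<alpha>" "0 \<le> \<beta>" "\<alpha> + \<beta> = 1"
  shows "x powr \<alpha> * y powr \<beta> \<le> A powr \<alpha> * B powr \<beta> * (\<alpha> / A * x + \<beta> / B * y)"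
proof (cases "x = 0 \<or> y = 0")
  case False
  then have "(x/A) powr \<alpha> * (y/B) powr \<beta> \<le> \<alpha> * (x/A) + \<beta> * (y/B)"
    using assms by (intro Youngs_inequality_0) auto
  then have "A powr \<alpha> * B powr \<beta> * ((x/A) powr \<alpha> * (y/B) powr \<beta>)
      \<le> A powr \<alpha> * B powr \<beta> * (\<alpha> * (x/A) + \<beta> * (y/B))"
    by (intro mult_left_mono) auto
  then show ?thesis
    using assms by (simp add: powr_divide field_simps)
qed (use assms in \<open>auto intro!: mult_nonneg_nonneg add_nonneg_nonneg\<close>)

lemma ennreal_Youngs_inequality_scaled:
  fixes X Y :: ennreal and A B \<alpha> \<beta> :: real
  assumes "0 < A" "0 < B" "0 < \<alpha>" "0 < \<beta>" "\<alpha> + \<beta> = 1"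
  shows "epowr X \<alpha> * epowr Y \<beta>
    \<le> ennreal (A powr \<alpha> * B powr \<beta>) * (ennreal (\<alpha> / A) * X + ennreal (\<beta> / B) * Y)"
proof (cases "X = \<top> \<or> Y = \<top>")
  case True
  then show ?thesis
    using assms by (cases "X = 0 \<or> Y = 0") (auto simp: ennreal_mult_top ennreal_top_mult)
next
  case False
  then obtain x y where xy: "X = ennreal x" "Y = ennreal y" "0 \<le> x" "0 \<le> y"
    by (metis ennreal_cases)
  have "x powr \<alpha> * y powr \<beta> \<le> A powr \<alpha> * B powr \<beta> * (\<alpha> / A * x + \<beta> / B * y)"
    using assms xy by (intro Youngs_inequality_scaled) auto
  moreover have "ennreal (\<alpha> / A) * X = ennreal (\<alpha> / A * x)" "ennreal (\<beta> / B) * Y = ennreal (\<beta> / B * y)"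
    using assms xy by (simp_all add: ennreal_mult[symmetric])
  then have "ennreal (A powr \<alpha> * B powr \<beta>) * (ennreal (\<alpha> / A) * X + ennreal (\<beta> / B) * Y)
      = ennreal (A powr \<alpha> * B powr \<beta> * (\<alpha> / A * x + \<beta> / B * y))"
    using assms xy by (simp add: ennreal_mult ennreal_plus[symmetric] del: ennreal_plus)
  ultimately show ?thesis
    using xy by (simp add: ennreal_mult[symmetric] ennreal_leI)
qed

lemma nn_integral_Holder:
  assumes f [measurable]: "f \<in> borel_measurable N" and g [measurable]: "g \<in> borel_measurable N"
    and "0 < \<alpha>" "0 < \<beta>" "\<alpha> + \<beta> = 1"
  shows "(\<integral>\<^sup>+x. epowr (f x) \<alpha> * epowr (g x) \<beta> \<partial>N)
           \<le> epowr (\<integral>\<^sup>+x. f x \<partial>N) \<alpha> * epowr (\<integral>\<^sup>+x. g x \<partial>N) \<beta>"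
proof -
  define A where "A = (\<integral>\<^sup>+x. f x \<partial>N)"
  define B where "B = (\<integral>\<^sup>+x. g x \<partial>N)"
  consider "A = 0 \<or> B = 0" | "A \<noteq> 0" "B \<noteq> 0" "A = \<top> \<or> B = \<top>" | a b where "A = ennreal a" "B = ennreal b" "0 < a" "0 < b"
    by (metis ennreal_cases ennreal_eq_0_iff not_le)
  then have "(\<integral>\<^sup>+x. epowr (f x) \<alpha> * epowr (g x) \<beta> \<partial>N) \<le> epowr A \<alpha> * epowr B \<beta>"
  proof cases
    case 1
    then have "AE x in N. f x = 0 \<or> g x = 0"
      unfolding A_def B_def by (auto simp: nn_integral_0_iff_AE elim!: eventually_mono)
    then have "(\<integral>\<^sup>+x. epowr (f x) \<alpha> * epowr (g x) \<beta> \<partial>N) = 0"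
      by (subst nn_integral_0_iff_AE) (auto elim!: eventually_mono)
    then show ?thesis by simp
  next
    case 2
    then have "epowr A \<alpha> * epowr B \<beta> = \<top>"
      by (auto simp: ennreal_top_mult ennreal_mult_top)
    then show ?thesis by simp
  next
    case (3 a b)
    \<comment> \<open>Young's inequality with the scales \<open>a\<close>, \<open>b\<close> equal to the two integrals\<close>
    have "(\<integral>\<^sup>+x. epowr (f x) \<alpha> * epowr (g x) \<beta> \<partial>N)
        \<le> (\<integral>\<^sup>+x. ennreal (a powr \<alpha> * b powr \<beta>) * (ennreal (\<alpha> / a) * f x + ennreal (\<beta> / b) * g x) \<partial>N)"
      using assms 3 by (intro nn_integral_mono ennreal_Youngs_inequality_scaled) auto
    also have "\<dots> = ennreal (a powr \<alpha> * b powr \<beta>) * (ennreal (\<alpha> / a) * A + ennreal (\<beta> / b) * B)"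
      unfolding A_def B_def by (simp add: nn_integral_cmult nn_integral_add)
    also have "ennreal (\<alpha> / a) * A + ennreal (\<beta> / b) * B = 1"
      using assms 3 by (simp add: ennreal_mult[symmetric] ennreal_plus[symmetric] del: ennreal_plus)
    also have "ennreal (a powr \<alpha> * b powr \<beta>) * 1 = epowr A \<alpha> * epowr B \<beta>"
      using 3 by (simp add: ennreal_mult)
    finally show ?thesis .
  qed
  then show ?thesis by (simp add: A_def B_def)
qed

lemma Lp_norm_Holder:
  assumes [measurable]: "f \<in> borel_measurable N" "g \<in> borel_measurable N"
    and "0 < a" "0 < b" "0 < c" "1/a = 1/b + 1/c"
  shows "Lp_norm N (ereal a) (\<lambda>x. f x * g x) \<le> Lp_norm N (ereal b) f * Lp_norm N (ereal c) g"
proof -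
  have exps: "0 < a/b" "0 < a/c" "a/b + a/c = 1" "0 < 1/a" "a/b * (1/a) = 1/b" "a/c * (1/a) = 1/c"
    using assms by (auto simp: field_simps)
  have "epowr (f x * g x) a = epowr (epowr (f x) b) (a/b) * epowr (epowr (g x) c) (a/c)" for x
    using assms by (simp add: epowr_mult epowr_epowr)
  then have "(\<integral>\<^sup>+x. epowr (f x * g x) a \<partial>N)
      \<le> epowr (\<integral>\<^sup>+x. epowr (f x) b \<partial>N) (a/b) * epowr (\<integral>\<^sup>+x. epowr (g x) c \<partial>N) (a/c)"
    using exps by (simp add: nn_integral_Holder)
  then have "Lp_norm N (ereal a) (\<lambda>x. f x * g x)
      \<le> epowr (epowr (\<integral>\<^sup>+x. epowr (f x) b \<partial>N) (a/b) * epowr (\<integral>\<^sup>+x. epowr (g x) c \<partial>N) (a/c)) (1/a)"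
    unfolding Lp_norm_ereal using exps by (intro epowr_mono) auto
  also have "\<dots> = Lp_norm N (ereal b) f * Lp_norm N (ereal c) g"
    unfolding Lp_norm_ereal by (simp only: epowr_mult[OF \<open>0 < 1/a\<close>] epowr_epowr exps)
  finally show ?thesis .
qed

lemma wnorm_mult_le:
  assumes [measurable]: "g \<in> borel_measurable M" "w \<in> borel_measurable M" "U \<in> borel_measurable M"
    and w_nonneg: "\<And>x. x \<in> space M \<Longrightarrow> 0 \<le> w x" and U_nonneg: "\<And>x. x \<in> space M \<Longrightarrow> 0 \<le> U x"
    and p0: "0 < p0" and p: "0 < p" and \<delta>: "0 < \<delta>" and exps: "inv_exp p = 1/p0 - \<delta>"
  shows "wnorm M (ereal p0) (\<lambda>x. w x * U x) g \<le> wnorm M p w g * Lp_norm M (ereal (1/\<delta>)) (\<lambda>x. ennreal (U x))"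
proof -
  have "wnorm M (ereal p0) (\<lambda>x. w x * U x) g
      = Lp_norm M (ereal p0) (\<lambda>x. ennreal (\<bar>g x\<bar> * w x) * ennreal (U x))"
    unfolding wnorm_def using w_nonneg U_nonneg by (intro Lp_norm_cong) (simp add: ennreal_mult mult.assoc)
  also have "\<dots> \<le> wnorm M p w g * Lp_norm M (ereal (1/\<delta>)) (\<lambda>x. ennreal (U x))"
  proof (cases p)
    case (real p')
    then have "1/p0 = 1/p' + 1/(1/\<delta>)" "0 < p'"
      using exps p by auto
    then show ?thesis
      unfolding wnorm_def real using p0 \<delta> by (intro Lp_norm_Holder) auto
  next
    case PInf
    define E where "E = esssup M (\<lambda>x. ennreal (\<bar>g x\<bar> * w x))"
    have "Lp_norm M (ereal p0) (\<lambda>x. ennreal (\<bar>g x\<bar> * w x) * ennreal (U x))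
        \<le> Lp_norm M (ereal p0) (\<lambda>x. E * ennreal (U x))"
      unfolding E_def using p0
      by (intro Lp_norm_mono_AE) (auto elim!: eventually_mono intro!: mult_right_mono esssup_AE[THEN eventually_mono])
    also have "\<dots> = E * Lp_norm M (ereal p0) (\<lambda>x. ennreal (U x))"
      using p0 by (intro Lp_norm_cmult) auto
    finally have "Lp_norm M (ereal p0) (\<lambda>x. ennreal (\<bar>g x\<bar> * w x) * ennreal (U x))
        \<le> E * Lp_norm M (ereal p0) (\<lambda>x. ennreal (U x))" .
    moreover have "1/\<delta> = p0"
      using PInf exps p0 \<delta> by (simp add: field_simps)
    ultimately show ?thesis
      by (simp add: wnorm_def E_def Lp_norm_def PInf)
  qed (use p in auto)
  finally show ?thesis .
qed

text \<open>Jensen's inequality, derived from Hoelder's inequality for the counting measure.\<close>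
lemma epowr_suminf_convex:
  fixes a :: "nat \<Rightarrow> real" and Y :: "nat \<Rightarrow> ennreal"
  assumes a: "\<And>k. 0 \<le> a k" "(\<Sum>k. ennreal (a k)) = 1" and t: "1 < t"
  shows "epowr (\<Sum>k. ennreal (a k) * Y k) t \<le> (\<Sum>k. ennreal (a k) * epowr (Y k) t)"
proof -
  define t' where "t' = t / (t - 1)"
  have t': "0 < t'" "1/1 = 1/t' + 1/t"
    using t unfolding t'_def by (auto simp: field_simps)
  define f where "f k = epowr (ennreal (a k)) (1/t')" for k
  define g where "g k = epowr (ennreal (a k)) (1/t) * Y k" for k
  have "f k * g k = ennreal (a k powr (1/t') * a k powr (1/t)) * Y k" for k
    unfolding f_def g_def using a(1)[of k] by (simp add: ennreal_mult mult.assoc)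
  also have "a k powr (1/t') * a k powr (1/t) = a k" for k
    using t'(2) a(1)[of k] by (simp add: powr_add[symmetric])
  finally have fg: "f k * g k = ennreal (a k) * Y k" for k .
  have f: "epowr (f k) t' = ennreal (a k)" for k
    unfolding f_def using t' by (simp add: epowr_epowr)
  have g: "epowr (g k) t = ennreal (a k) * epowr (Y k) t" for k
    unfolding g_def using t by (simp add: epowr_epowr epowr_mult)
  have "(\<Sum>k. ennreal (a k) * Y k) = Lp_norm (count_space UNIV) (ereal 1) (\<lambda>k. f k * g k)"
    by (simp add: Lp_norm_one fg nn_integral_count_space_nat)
  also have "\<dots> \<le> Lp_norm (count_space UNIV) (ereal t') f * Lp_norm (count_space UNIV) (ereal t) g"
    using t t' by (intro Lp_norm_Holder) auto
  also have "\<dots> = epowr (\<Sum>k. ennreal (a k) * epowr (Y k) t) (1/t)"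
    using a(2) by (simp add: Lp_norm_ereal nn_integral_count_space_nat f g)
  finally have "epowr (\<Sum>k. ennreal (a k) * Y k) t
      \<le> epowr (epowr (\<Sum>k. ennreal (a k) * epowr (Y k) t) (1/t)) t"
    using t by (intro epowr_mono) auto
  then show ?thesis
    using t by simp
qed

section \<open>The maximal operator\<close>
lemma is_basis_sets: "is_basis M \<U> \<Longrightarrow> U \<in> \<U> \<Longrightarrow> U \<in> sets M"
  by (auto simp: is_basis_def)

lemma is_basis_emeasure_pos: "is_basis M \<U> \<Longrightarrow> U \<in> \<U> \<Longrightarrow> 0 < emeasure M U"
  by (simp add: is_basis_def)

lemma is_basis_measure_pos: "is_basis M \<U> \<Longrightarrow> U \<in> \<U> \<Longrightarrow> 0 < measure M U"
  by (auto simp: is_basis_def measure_def enn2real_positive_iff less_top)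

lemma is_basis_emeasure: "is_basis M \<U> \<Longrightarrow> U \<in> \<U> \<Longrightarrow> emeasure M U = ennreal (measure M U)"
  by (auto simp: is_basis_def emeasure_eq_ennreal_measure less_top)

lemma is_basis_space_empty: "is_basis M \<U> \<Longrightarrow> space M = {} \<Longrightarrow> \<U> = {}"
  using is_basis_emeasure_pos[of M \<U>] is_basis_sets[of M \<U>] sets.sets_into_space by fastforce

lemma average_le_maxop:
  "U \<in> \<U> \<Longrightarrow> x \<in> U \<Longrightarrow> ennreal (1 / measure M U) * (\<integral>\<^sup>+y\<in>U. ennreal \<bar>f y\<bar> \<partial>M) \<le> maxop M \<U> f x"
  unfolding maxop_def by (rule SUP_upper) auto

lemma maxop_cmult:
  assumes "is_basis M \<U>" "f \<in> borel_measurable M" "0 \<le> c"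
  shows "maxop M \<U> (\<lambda>y. c * f y) x = ennreal c * maxop M \<U> f x"
proof -
  have "(\<integral>\<^sup>+y\<in>U. ennreal \<bar>c * f y\<bar> \<partial>M) = ennreal c * (\<integral>\<^sup>+y\<in>U. ennreal \<bar>f y\<bar> \<partial>M)"
    if "U \<in> \<U>" for U
    using assms is_basis_sets[OF assms(1) that]
    by (subst nn_integral_cmult[symmetric]) (auto simp: abs_mult ennreal_mult mult.assoc)
  then show ?thesis
    unfolding maxop_def SUP_mult_left_ennreal by (intro SUP_cong) (simp_all add: mult.left_commute)
qed

lemma maxop_eq_0_if_AE:
  assumes "AE y in M. f y = 0"
  shows "maxop M \<U> f x = 0"
proof -
  have "(\<integral>\<^sup>+y\<in>U. ennreal \<bar>f y\<bar> \<partial>M) = (\<integral>\<^sup>+y. 0 \<partial>M)" for U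
    using assms by (intro nn_integral_cong_AE) (auto elim!: eventually_mono)
  then show ?thesis
    unfolding maxop_def by (intro antisym SUP_least) auto
qed

lemma borel_measurable_maxop [measurable]:
  assumes "is_basis M \<U>"
  shows "maxop M \<U> f \<in> borel_measurable M"
proof -
  define C where "C U = ennreal (1 / measure M U) * (\<integral>\<^sup>+y\<in>U. ennreal \<bar>f y\<bar> \<partial>M)" for U
  have eq: "maxop M \<U> f x = (SUP U\<in>\<U>. C U * indicator U x)" for x
  proof (rule antisym)
    show "maxop M \<U> f x \<le> (SUP U\<in>\<U>. C U * indicator U x)"
      unfolding maxop_def C_def[symmetric] by (rule SUP_least) (auto intro!: SUP_upper2)
    show "(SUP U\<in>\<U>. C U * indicator U x) \<le> maxop M \<U> f x"
    proof (rule SUP_least)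
      fix U assume "U \<in> \<U>"
      then show "C U * indicator U x \<le> maxop M \<U> f x"
        unfolding C_def by (cases "x \<in> U") (auto intro: average_le_maxop)
    qed
  qed
  have "countable \<U>"
    using assms by (simp add: is_basis_def)
  then have "(\<lambda>x. SUP U\<in>\<U>. C U * indicator U x) \<in> borel_measurable M"
    using is_basis_sets[OF assms] by measurable
  then show ?thesis
    unfolding eq[abs_def] .
qed

lemma Lp_norm_maxop_le:
  assumes basis: "is_basis M \<U>" and f [measurable]: "f \<in> borel_measurable M"
    and v: "is_weight M v" and t: "0 < t" and fin: "wnorm M (ereal t) v f < \<top>"
  shows "Lp_norm M (ereal t) (\<lambda>x. maxop M \<U> f x * ennreal (v x))
          \<le> maxop_norm M \<U> (ereal t) v * wnorm M (ereal t) v f"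
proof -
  have [measurable]: "v \<in> borel_measurable M" and vpos: "\<And>x. x \<in> space M \<Longrightarrow> 0 < v x"
    using v by (auto simp: is_weight_def)
  consider "wnorm M (ereal t) v f = 0" | W where "wnorm M (ereal t) v f = ennreal W" "0 < W"
    using fin by (metis ennreal_cases ennreal_eq_0_iff less_top not_le)
  then show ?thesis
  proof cases
    case 1
    then have "AE x in M. f x = 0"
      using v f t by (rule wnorm_eq_0_imp_AE)
    then show ?thesis
      using t by (simp add: maxop_eq_0_if_AE Lp_norm_ereal)
  next
    case (2 W)
    \<comment> \<open>normalise \<open>f\<close> to the unit ball and use the definition of \<open>maxop_norm\<close>\<close>
    define g where "g y = (1/W) * f y" for y
    have [measurable]: "g \<in> borel_measurable M"
      unfolding g_def by measurable
    have "wnorm M (ereal t) v g = Lp_norm M (ereal t) (\<lambda>x. ennreal (1/W) * ennreal (\<bar>f x\<bar> * v x))"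
      unfolding wnorm_def g_def using vpos 2
      by (intro Lp_norm_cong) (simp add: ennreal_mult[symmetric] abs_mult less_imp_le)
    also have "\<dots> = 1"
      using 2 t by (subst Lp_norm_cmult) (auto simp: wnorm_def ennreal_mult[symmetric])
    finally have "Lp_norm M (ereal t) (\<lambda>x. maxop M \<U> g x * ennreal (v x)) \<le> maxop_norm M \<U> (ereal t) v"
      unfolding maxop_norm_def by (intro SUP_upper) auto
    moreover have "maxop M \<U> f x * ennreal (v x) = ennreal W * (maxop M \<U> g x * ennreal (v x))" for x
    proof -
      have "maxop M \<U> g x = ennreal (1/W) * maxop M \<U> f x"
        unfolding g_def using 2 basis by (intro maxop_cmult) auto
      then show ?thesis
        using 2 by (simp add: mult.assoc[symmetric] ennreal_mult[symmetric])
    qed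
    then have "Lp_norm M (ereal t) (\<lambda>x. maxop M \<U> f x * ennreal (v x))
        = ennreal W * Lp_norm M (ereal t) (\<lambda>x. maxop M \<U> g x * ennreal (v x))"
      using t basis by (simp add: Lp_norm_cmult)
    ultimately show ?thesis
      using 2 by (simp add: mult.commute mult_left_mono)
  qed
qed

lemma maxop_pos:
  assumes basis: "is_basis M \<U>" and [measurable]: "f \<in> borel_measurable M"
    and E: "0 < emeasure M {y\<in>space M. f y \<noteq> 0}" and x: "x \<in> space M"
  shows "0 < maxop M \<U> f x"
proof (rule ccontr)
  assume "\<not> 0 < maxop M \<U> f x"
  then have zero: "maxop M \<U> f x = 0"
    by simp
  define E where "E = {y\<in>space M. f y \<noteq> 0}"
  have E_sets [measurable]: "E \<in> sets M"
    unfolding E_def by measurable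
  have null: "U \<inter> E \<in> null_sets M" if U: "U \<in> \<U>" "x \<in> U" for U
  proof -
    have [measurable]: "U \<in> sets M"
      using is_basis_sets[OF basis U(1)] .
    have "(\<integral>\<^sup>+y. ennreal \<bar>f y\<bar> * indicator U y \<partial>M) = 0"
      using average_le_maxop[OF U, of M f] zero is_basis_measure_pos[OF basis U(1)] by simp
    then have "AE y in M. ennreal \<bar>f y\<bar> * indicator U y = 0"
      by (subst (asm) nn_integral_0_iff_AE) auto
    then have "AE y in M. y \<notin> U \<inter> E"
      by (rule eventually_mono) (auto simp: E_def indicator_def split: if_splits)
    moreover have "U \<inter> E \<in> sets M"
      by measurable
    ultimately show ?thesis
      by (simp add: AE_iff_null_sets)
  qed
  have "countable \<U>"
    using basis by (simp add: is_basis_def)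
  then have "countable {U\<in>\<U>. x \<in> U}"
    by (rule countable_subset[rotated]) auto
  then have N: "(\<Union>U\<in>{U\<in>\<U>. x \<in> U}. U \<inter> E) \<in> null_sets M"
    using null by (intro null_sets_UN') blast+
  \<comment> \<open>every point of \<open>E\<close> shares a basis set with \<open>x\<close>\<close>
  have "E \<subseteq> (\<Union>U\<in>{U\<in>\<U>. x \<in> U}. U \<inter> E)"
    using basis x unfolding is_basis_def E_def by blast
  then have "E \<in> null_sets M"
    by (rule null_sets_subset[OF N E_sets])
  then show False
    using E by (simp add: E_def null_sets_def)
qed

section \<open>The Rubio de Francia iteration\<close>

text \<open>The truncation \<open>enn2real\<close> is harmless: all iterates are finite almost everywhere
  (\<open>AE_maxop_iter_less_top\<close>), and \<open>maxop\<close> does not see null sets.\<close>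
primrec maxop_iter :: "'a measure \<Rightarrow> 'a set set \<Rightarrow> ('a \<Rightarrow> real) \<Rightarrow> nat \<Rightarrow> 'a \<Rightarrow> ennreal" where
  "maxop_iter M \<U> H 0 = (\<lambda>x. ennreal (H x))"
| "maxop_iter M \<U> H (Suc k) = maxop M \<U> (\<lambda>x. enn2real (maxop_iter M \<U> H k x))"

definition rubio_de_francia :: "'a measure \<Rightarrow> 'a set set \<Rightarrow> real \<Rightarrow> ('a \<Rightarrow> real) \<Rightarrow> 'a \<Rightarrow> ennreal" where
  "rubio_de_francia M \<U> D H x = (\<Sum>k. ennreal (1 / D ^ k) * maxop_iter M \<U> H k x)"

definition A1_bounded :: "'a measure \<Rightarrow> 'a set set \<Rightarrow> ('a \<Rightarrow> real) \<Rightarrow> real \<Rightarrow> bool" where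
  "A1_bounded M \<U> V D \<longleftrightarrow> (\<forall>Q\<in>\<U>. AE x in M. x \<in> Q \<longrightarrow>
     ennreal (1 / measure M Q) * (\<integral>\<^sup>+y\<in>Q. ennreal (V y) \<partial>M) \<le> ennreal (D * V x))"

lemma A1_bounded_if_AE_eq:
  assumes R: "AE x in M. ennreal (V x) = R x" and V_pos: "\<And>x. x \<in> space M \<Longrightarrow> 0 \<le> V x" and D: "0 \<le> D"
    and avg: "\<And>Q x. Q \<in> \<U> \<Longrightarrow> x \<in> Q \<Longrightarrow> ennreal (1 / measure M Q) * (\<integral>\<^sup>+y\<in>Q. R y \<partial>M) \<le> ennreal D * R x"
  shows "A1_bounded M \<U> V D"
  unfolding A1_bounded_def
proof
  fix Q assume Q: "Q \<in> \<U>"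
  have eq: "(\<integral>\<^sup>+y\<in>Q. ennreal (V y) \<partial>M) = (\<integral>\<^sup>+y\<in>Q. R y \<partial>M)"
    using R by (intro nn_integral_cong_AE) (auto elim!: eventually_mono)
  show "AE x in M. x \<in> Q \<longrightarrow> ennreal (1 / measure M Q) * (\<integral>\<^sup>+y\<in>Q. ennreal (V y) \<partial>M) \<le> ennreal (D * V x)"
    using R AE_space
  proof eventually_elim
    case (elim x)
    then have "ennreal (D * V x) = ennreal D * R x"
      using V_pos[OF elim(2)] D by (simp add: ennreal_mult)
    then show ?case
      using avg[OF Q] by (simp add: eq)
  qed
qed

lemma A1_bounded_set_nn_integral:
  assumes basis: "is_basis M \<U>" and V [measurable]: "V \<in> borel_measurable M"
    and V_pos: "\<And>x. x \<in> space M \<Longrightarrow> 0 < V x" and A1: "A1_bounded M \<U> V D" and Q: "Q \<in> \<U>"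
  obtains a where "(\<integral>\<^sup>+y\<in>Q. ennreal (V y) \<partial>M) = ennreal a" "0 < a"
proof -
  have Q_sets [measurable]: "Q \<in> sets M"
    using is_basis_sets[OF basis Q] .
  let ?A = "\<integral>\<^sup>+y\<in>Q. ennreal (V y) \<partial>M"
  have "AE x in M. x \<in> Q \<longrightarrow> ennreal (1 / measure M Q) * ?A \<le> ennreal (D * V x)"
    using A1 Q by (simp add: A1_bounded_def)
  from AE_imp_ex_in_set[OF this Q_sets is_basis_emeasure_pos[OF basis Q]]
  obtain x0 where "ennreal (1 / measure M Q) * ?A \<le> ennreal (D * V x0)"
    by blast
  then have "ennreal (1 / measure M Q) * ?A < \<top>"
    by (simp add: le_less_trans)
  then have "?A < \<top>"
    using is_basis_measure_pos[OF basis Q] by (auto simp: ennreal_mult_less_top)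
  moreover have "?A \<noteq> 0"
  proof
    assume "?A = 0"
    then have "AE y in M. ennreal (V y) * indicator Q y = 0"
      by (subst (asm) nn_integral_0_iff_AE) auto
    with AE_space have "AE y in M. y \<in> Q \<longrightarrow> False"
      by eventually_elim (auto simp: indicator_def dest: V_pos split: if_splits)
    from AE_imp_ex_in_set[OF this Q_sets is_basis_emeasure_pos[OF basis Q]] show False
      by blast
  qed
  ultimately show ?thesis
    using that by (metis ennreal_cases ennreal_eq_0_iff less_top not_le)
qed

lemma A1_bounded_average_lower_bound:
  assumes basis: "is_basis M \<U>" and V [measurable]: "V \<in> borel_measurable M"
    and V_pos: "\<And>x. x \<in> space M \<Longrightarrow> 0 < V x" and A1: "A1_bounded M \<U> V D" and D: "0 < D"
    and Q: "Q \<in> \<U>"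
  obtains a where "(\<integral>\<^sup>+y\<in>Q. ennreal (V y) \<partial>M) = ennreal a" "0 < a"
    "AE x in restrict_space M Q. a / (measure M Q * D) \<le> V x"
proof -
  have [measurable]: "Q \<in> sets M"
    using is_basis_sets[OF basis Q] .
  have m: "0 < measure M Q"
    using is_basis_measure_pos[OF basis Q] .
  obtain a where a: "(\<integral>\<^sup>+y\<in>Q. ennreal (V y) \<partial>M) = ennreal a" "0 < a"
    using A1_bounded_set_nn_integral[OF basis V V_pos A1 Q] .
  have "AE x in M. x \<in> Q \<longrightarrow> ennreal (1 / measure M Q) * ennreal a \<le> ennreal (D * V x)"
    using A1 Q by (simp add: A1_bounded_def a(1)[symmetric])
  then have "AE x in M. x \<in> Q \<longrightarrow> a / (measure M Q * D) \<le> V x"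
    using AE_space
  proof eventually_elim
    case (elim x)
    show ?case
    proof
      assume "x \<in> Q"
      then have "ennreal (1 / measure M Q * a) \<le> ennreal (D * V x)"
        using elim a m by (simp add: ennreal_mult[symmetric])
      then have "1 / measure M Q * a \<le> D * V x"
        using D V_pos[OF elim(2)] by (subst (asm) ennreal_le_iff) auto
      then show "a / (measure M Q * D) \<le> V x"
        using m D by (simp add: field_simps)
    qed
  qed
  then have "AE x in restrict_space M Q. a / (measure M Q * D) \<le> V x"
    by (simp add: AE_restrict_space_iff)
  with a show ?thesis
    using that by blast
qed

lemma ennreal_le_suminf: "f k \<le> (\<Sum>i. f i :: ennreal)"
  using sum_le_suminf[of f "{k}"] by simp

lemma ennreal_suminf_Suc_le: "(\<Sum>i. f (Suc i)) \<le> (\<Sum>i. f i :: ennreal)"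
  using suminf_offset[of f 1] by (simp add: add_increasing2)

lemma suminf_geometric_weights:
  fixes \<kappa> :: real
  assumes "1 < \<kappa>"
  shows "(\<Sum>k. ennreal (1 / \<kappa> * (1 / (\<kappa> / (\<kappa> - 1))) ^ k)) = 1"
proof -
  define \<kappa>' where "\<kappa>' = \<kappa> / (\<kappa> - 1)"
  have geom: "summable (\<lambda>k. (1 / \<kappa>') ^ k)"
    unfolding \<kappa>'_def using assms by (intro summable_geometric) simp
  then have "(\<Sum>k. 1 / \<kappa> * (1 / \<kappa>') ^ k) = 1 / \<kappa> * (\<Sum>k. (1 / \<kappa>') ^ k)"
    by (rule suminf_mult)
  also have "(\<Sum>k. (1 / \<kappa>') ^ k) = 1 / (1 - 1 / \<kappa>')"
    unfolding \<kappa>'_def using assms by (intro suminf_geometric) simp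
  also have "1 - 1 / \<kappa>' = 1 / \<kappa>"
    unfolding \<kappa>'_def using assms by (simp add: field_simps)
  finally have "(\<Sum>k. 1 / \<kappa> * (1 / \<kappa>') ^ k) = 1"
    using assms by simp
  moreover have "1 < \<kappa>'"
    unfolding \<kappa>'_def using assms by (simp add: field_simps)
  ultimately show ?thesis
    using geom assms unfolding \<kappa>'_def[symmetric] by (subst suminf_ennreal2) (auto intro: summable_mult)
qed

locale rubio_de_francia_setting =
  fixes M :: "'a measure" and \<U> :: "'a set set" and v :: "'a \<Rightarrow> real" and t B :: real
    and H :: "'a \<Rightarrow> real"
  assumes basis: "is_basis M \<U>" and v: "is_weight M v" and t: "1 < t" and B: "0 < B"
    and maxop_norm_le: "maxop_norm M \<U> (ereal t) v \<le> ennreal B"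
    and H [measurable]: "H \<in> borel_measurable M" and H_nonneg: "\<And>x. x \<in> space M \<Longrightarrow> 0 \<le> H x"
    and H_fin: "Lp_norm M (ereal t) (\<lambda>x. ennreal (H x * v x)) < \<top>"
begin

lemma v_measurable [measurable]: "v \<in> borel_measurable M"
  and v_pos: "x \<in> space M \<Longrightarrow> 0 < v x"
  using v by (auto simp: is_weight_def)

lemma borel_measurable_maxop_iter [measurable]: "maxop_iter M \<U> H k \<in> borel_measurable M"
  by (cases k) (simp_all add: borel_measurable_maxop[OF basis])

lemma Lp_norm_maxop_iter_le:
  "Lp_norm M (ereal t) (\<lambda>x. maxop_iter M \<U> H k x * ennreal (v x))
     \<le> ennreal (B ^ k) * Lp_norm M (ereal t) (\<lambda>x. ennreal (H x * v x))"
proof (induction k)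
  case 0
  have "Lp_norm M (ereal t) (\<lambda>x. maxop_iter M \<U> H 0 x * ennreal (v x))
      = Lp_norm M (ereal t) (\<lambda>x. ennreal (H x * v x))"
    using H_nonneg v_pos by (intro Lp_norm_cong) (simp add: ennreal_mult less_imp_le)
  then show ?case
    by simp
next
  case (Suc k)
  let ?L = "Lp_norm M (ereal t) (\<lambda>x. ennreal (H x * v x))"
    and ?G = "maxop_iter M \<U> H k"
  have "ennreal (B ^ k) * ?L < \<top>"
    using H_fin by (simp add: ennreal_mult_less_top)
  then have fin: "Lp_norm M (ereal t) (\<lambda>x. ?G x * ennreal (v x)) < \<top>"
    using Suc by (rule le_less_trans[rotated])
  then have "AE x in M. ?G x < \<top>"
    using v_pos by (intro AE_less_top_if_weighted_Lp_norm_less_top) auto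
  then have "AE x in M. ennreal (\<bar>enn2real (?G x)\<bar> * v x) = ?G x * ennreal (v x)"
    using AE_space by eventually_elim (use v_pos in \<open>simp add: ennreal_mult less_top less_imp_le\<close>)
  then have wn: "wnorm M (ereal t) v (\<lambda>x. enn2real (?G x)) = Lp_norm M (ereal t) (\<lambda>x. ?G x * ennreal (v x))"
    unfolding wnorm_def using t by (intro Lp_norm_cong_AE) auto
  have "Lp_norm M (ereal t) (\<lambda>x. maxop_iter M \<U> H (Suc k) x * ennreal (v x))
      \<le> maxop_norm M \<U> (ereal t) v * wnorm M (ereal t) v (\<lambda>x. enn2real (?G x))"
    unfolding maxop_iter.simps using basis v t fin wn by (intro Lp_norm_maxop_le) auto
  also have "\<dots> \<le> ennreal B * (ennreal (B ^ k) * ?L)"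
    unfolding wn using maxop_norm_le Suc by (rule mult_mono) auto
  finally show ?case
    using B by (simp add: ennreal_mult mult.assoc)
qed

lemma AE_maxop_iter_less_top: "AE x in M. maxop_iter M \<U> H k x < \<top>"
proof -
  have "ennreal (B ^ k) * Lp_norm M (ereal t) (\<lambda>x. ennreal (H x * v x)) < \<top>"
    using H_fin by (simp add: ennreal_mult_less_top)
  then have "Lp_norm M (ereal t) (\<lambda>x. maxop_iter M \<U> H k x * ennreal (v x)) < \<top>"
    using Lp_norm_maxop_iter_le[of k] by (rule le_less_trans[rotated])
  then show ?thesis
    using v_pos by (intro AE_less_top_if_weighted_Lp_norm_less_top) auto
qed

lemma borel_measurable_rubio_de_francia [measurable]:
  "rubio_de_francia M \<U> D H \<in> borel_measurable M"
  unfolding rubio_de_francia_def by measurable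

lemma rubio_de_francia_ge: "ennreal (H x) \<le> rubio_de_francia M \<U> D H x"
  using ennreal_le_suminf[of "\<lambda>k. ennreal (1 / D ^ k) * maxop_iter M \<U> H k x" 0]
  by (simp add: rubio_de_francia_def)

lemma rubio_de_francia_pos:
  assumes "0 < D" "0 < emeasure M {x\<in>space M. H x \<noteq> 0}" "x \<in> space M"
  shows "0 < rubio_de_francia M \<U> D H x"
proof -
  have "{y\<in>space M. enn2real (maxop_iter M \<U> H 0 y) \<noteq> 0} = {y\<in>space M. H y \<noteq> 0}"
    using H_nonneg by auto
  then have "0 < maxop_iter M \<U> H 1 x"
    using assms by (simp add: maxop_pos[OF basis])
  then have "0 < ennreal (1 / D ^ 1) * maxop_iter M \<U> H 1 x"
    using assms(1) by (simp add: zero_less_iff_neq_zero del: power_one_right)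
  also have "\<dots> \<le> rubio_de_francia M \<U> D H x"
    unfolding rubio_de_francia_def by (rule ennreal_le_suminf)
  finally show ?thesis .
qed

lemma average_rubio_de_francia_le:
  assumes D: "0 < D" and Q: "Q \<in> \<U>" "x \<in> Q"
  shows "ennreal (1 / measure M Q) * (\<integral>\<^sup>+y\<in>Q. rubio_de_francia M \<U> D H y \<partial>M)
    \<le> ennreal D * rubio_de_francia M \<U> D H x"
proof -
  let ?G = "maxop_iter M \<U> H" and ?avg = "\<lambda>g. ennreal (1 / measure M Q) * (\<integral>\<^sup>+y\<in>Q. g y \<partial>M)"
  have [measurable]: "Q \<in> sets M"
    using is_basis_sets[OF basis Q(1)] .
  \<comment> \<open>the average of the \<open>k\<close>-th term is at most the \<open>(k+1)\<close>-st term at \<open>x\<close>; the index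
     shift costs the factor \<open>D\<close>\<close>
  have step: "?avg (?G k) \<le> ?G (Suc k) x" for k
  proof -
    have "(\<integral>\<^sup>+y\<in>Q. ?G k y \<partial>M) = (\<integral>\<^sup>+y\<in>Q. ennreal \<bar>enn2real (?G k y)\<bar> \<partial>M)"
      using AE_maxop_iter_less_top[of k] by (intro nn_integral_cong_AE) (auto elim!: eventually_mono)
    then show ?thesis
      using average_le_maxop[OF Q, of M "\<lambda>y. enn2real (?G k y)"] by simp
  qed
  have "(\<integral>\<^sup>+y\<in>Q. rubio_de_francia M \<U> D H y \<partial>M)
      = (\<integral>\<^sup>+y. (\<Sum>k. ennreal (1 / D ^ k) * (?G k y * indicator Q y)) \<partial>M)"
    unfolding rubio_de_francia_def by (simp add: ennreal_suminf_multc[symmetric] mult.assoc)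
  also have "\<dots> = (\<Sum>k. ennreal (1 / D ^ k) * (\<integral>\<^sup>+y\<in>Q. ?G k y \<partial>M))"
    by (subst nn_integral_suminf) (auto simp: nn_integral_cmult)
  finally have "?avg (rubio_de_francia M \<U> D H) = (\<Sum>k. ennreal (1 / D ^ k) * ?avg (?G k))"
    by (simp add: ennreal_suminf_cmult[symmetric] ac_simps del: ennreal_suminf_cmult)
  also have "\<dots> \<le> (\<Sum>k. ennreal (1 / D ^ k) * ?G (Suc k) x)"
    using step by (intro suminf_le mult_left_mono) auto
  also have "\<dots> = ennreal D * (\<Sum>k. ennreal (1 / D ^ Suc k) * ?G (Suc k) x)"
  proof -
    have "ennreal (1 / D ^ k) = ennreal D * ennreal (1 / D ^ Suc k)" for k
      using D by (simp add: ennreal_mult[symmetric])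
    then show ?thesis
      unfolding ennreal_suminf_cmult[symmetric] by (simp add: mult.assoc)
  qed
  also have "\<dots> \<le> ennreal D * rubio_de_francia M \<U> D H x"
    unfolding rubio_de_francia_def by (intro mult_left_mono ennreal_suminf_Suc_le) auto
  finally show ?thesis .
qed

text \<open>Summing the iterates with weights \<open>B\<^sup>k\<close>-normalised turns the series into a convex
  combination, to which \<open>epowr_suminf_convex\<close> applies.\<close>
lemma Lp_norm_rubio_de_francia_le:
  assumes \<kappa>: "1 < \<kappa>"
  shows "Lp_norm M (ereal t) (\<lambda>x. rubio_de_francia M \<U> (\<kappa> / (\<kappa> - 1) * B) H x * ennreal (v x))
    \<le> ennreal \<kappa> * Lp_norm M (ereal t) (\<lambda>x. ennreal (H x * v x))"
proof -
  define L where "L = Lp_norm M (ereal t) (\<lambda>x. ennreal (H x * v x))"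
  define \<kappa>' where "\<kappa>' = \<kappa> / (\<kappa> - 1)"
  have \<kappa>': "1 < \<kappa>'"
    unfolding \<kappa>'_def using \<kappa> by (simp add: field_simps)
  define D where "D = \<kappa>' * B"
  define a where "a k = 1 / \<kappa> * (1 / \<kappa>') ^ k" for k
  define Y where "Y k x = ennreal (\<kappa> / B ^ k) * (maxop_iter M \<U> H k x * ennreal (v x))" for k x
  have a_nonneg: "0 \<le> a k" for k
    unfolding a_def using \<kappa> \<kappa>' by simp
  have a_sum: "(\<Sum>k. ennreal (a k)) = 1"
    unfolding a_def \<kappa>'_def using \<kappa> by (rule suminf_geometric_weights)
  have "rubio_de_francia M \<U> D H x * ennreal (v x) = (\<Sum>k. ennreal (a k) * Y k x)" for x
  proof -
    have "a k * (\<kappa> / B ^ k) = 1 / D ^ k" for k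
      unfolding a_def D_def using \<kappa> B \<kappa>' by (simp add: power_one_over power_mult_distrib)
    then have "ennreal (1 / D ^ k) * maxop_iter M \<U> H k x * ennreal (v x) = ennreal (a k) * Y k x" for k
      unfolding Y_def using a_nonneg[of k] \<kappa> B
      by (simp add: ennreal_mult[symmetric] mult.assoc[symmetric])
    then show ?thesis
      unfolding rubio_de_francia_def ennreal_suminf_multc[symmetric] by simp
  qed
  moreover have Y_le: "(\<integral>\<^sup>+x. epowr (Y k x) t \<partial>M) \<le> epowr (ennreal \<kappa> * L) t" for k
  proof -
    have "Lp_norm M (ereal t) (Y k) \<le> ennreal (\<kappa> / B ^ k) * (ennreal (B ^ k) * L)"
      unfolding Y_def L_def using t
      by (subst Lp_norm_cmult) (auto intro: mult_left_mono Lp_norm_maxop_iter_le)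
    also have "\<dots> = ennreal \<kappa> * L"
      using B \<kappa> by (simp add: ennreal_mult[symmetric] mult.assoc[symmetric])
    finally have "epowr (Lp_norm M (ereal t) (Y k)) t \<le> epowr (ennreal \<kappa> * L) t"
      using t by (intro epowr_mono) auto
    then show ?thesis
      using t by (simp add: Lp_norm_ereal)
  qed
  ultimately have "(\<integral>\<^sup>+x. epowr (rubio_de_francia M \<U> D H x * ennreal (v x)) t \<partial>M)
      \<le> (\<integral>\<^sup>+x. (\<Sum>k. ennreal (a k) * epowr (Y k x) t) \<partial>M)"
    using a_nonneg a_sum t by (auto intro!: nn_integral_mono epowr_suminf_convex)
  also have "\<dots> = (\<Sum>k. ennreal (a k) * (\<integral>\<^sup>+x. epowr (Y k x) t \<partial>M))"
    unfolding Y_def by (subst nn_integral_suminf) (auto simp: nn_integral_cmult)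
  also have "\<dots> \<le> (\<Sum>k. ennreal (a k) * epowr (ennreal \<kappa> * L) t)"
    using Y_le by (intro suminf_le mult_left_mono) auto
  also have "\<dots> = epowr (ennreal \<kappa> * L) t"
    using a_sum by simp
  finally have "epowr (\<integral>\<^sup>+x. epowr (rubio_de_francia M \<U> D H x * ennreal (v x)) t \<partial>M) (1/t)
      \<le> epowr (epowr (ennreal \<kappa> * L) t) (1/t)"
    using t by (intro epowr_mono) auto
  then show ?thesis
    using t by (simp add: Lp_norm_ereal L_def D_def \<kappa>'_def)
qed

lemma AE_rubio_de_francia_less_top:
  assumes "1 < \<kappa>"
  shows "AE x in M. rubio_de_francia M \<U> (\<kappa> / (\<kappa> - 1) * B) H x < \<top>"
proof -
  have "ennreal \<kappa> * Lp_norm M (ereal t) (\<lambda>x. ennreal (H x * v x)) < \<top>"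
    using H_fin by (simp add: ennreal_mult_less_top)
  then have "Lp_norm M (ereal t) (\<lambda>x. rubio_de_francia M \<U> (\<kappa> / (\<kappa> - 1) * B) H x * ennreal (v x)) < \<top>"
    using Lp_norm_rubio_de_francia_le[OF assms] by (rule le_less_trans[rotated])
  then show ?thesis
    using v_pos by (intro AE_less_top_if_weighted_Lp_norm_less_top) auto
qed

lemma exists_A1_majorant:
  assumes \<kappa>: "1 < \<kappa>" and H_pos: "0 < emeasure M {x\<in>space M. H x \<noteq> 0}"
  obtains V where "V \<in> borel_measurable M" "\<And>x. x \<in> space M \<Longrightarrow> 0 < V x" "AE x in M. H x \<le> V x"
    "Lp_norm M (ereal t) (\<lambda>x. ennreal (V x * v x)) \<le> ennreal \<kappa> * Lp_norm M (ereal t) (\<lambda>x. ennreal (H x * v x))"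
    "A1_bounded M \<U> V (\<kappa> / (\<kappa> - 1) * B)"
proof -
  define D where "D = \<kappa> / (\<kappa> - 1) * B"
  have D: "0 < D"
    unfolding D_def using \<kappa> B by simp
  let ?R = "rubio_de_francia M \<U> D H"
  \<comment> \<open>a real-valued version of \<open>?R\<close>, changed only on a null set\<close>
  define V where "V x = (if ?R x = \<top> then 1 else enn2real (?R x))" for x
  have V_R: "AE x in M. ennreal (V x) = ?R x"
    using AE_rubio_de_francia_less_top[OF \<kappa>] by (auto elim!: eventually_mono simp: V_def D_def)
  show ?thesis
  proof
    show "V \<in> borel_measurable M"
      unfolding V_def by measurable
    show V_pos: "0 < V x" if "x \<in> space M" for x
      using rubio_de_francia_pos[OF D H_pos that] by (auto simp: V_def enn2real_positive_iff less_top)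
    show "AE x in M. H x \<le> V x"
      using V_R AE_space
    proof eventually_elim
      case (elim x)
      then have "ennreal (H x) \<le> ennreal (V x)"
        using rubio_de_francia_ge[of x D] by simp
      then show ?case
        using V_pos[OF elim(2)] by simp
    qed
    have "AE x in M. ennreal (V x * v x) = ?R x * ennreal (v x)"
      using V_R AE_space by eventually_elim (use V_pos v_pos in \<open>simp add: ennreal_mult less_imp_le\<close>)
    then have "Lp_norm M (ereal t) (\<lambda>x. ennreal (V x * v x)) = Lp_norm M (ereal t) (\<lambda>x. ?R x * ennreal (v x))"
      using t by (intro Lp_norm_cong_AE) auto
    then show "Lp_norm M (ereal t) (\<lambda>x. ennreal (V x * v x)) \<le> ennreal \<kappa> * Lp_norm M (ereal t) (\<lambda>x. ennreal (H x * v x))"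
      using Lp_norm_rubio_de_francia_le[OF \<kappa>] by (simp add: D_def)
    show "A1_bounded M \<U> V (\<kappa> / (\<kappa> - 1) * B)"
      unfolding D_def[symmetric]
      using V_R V_pos D average_rubio_de_francia_le[OF D] by (intro A1_bounded_if_AE_eq) (auto simp: less_imp_le)
  qed
qed

end

section \<open>Norming functions\<close>

lemma (in sigma_finite_measure) obtain_finite_positive_subset:
  assumes "E \<in> sets M" "0 < emeasure M E"
  obtains B where "B \<in> sets M" "B \<subseteq> E" "0 < emeasure M B" "emeasure M B < \<infinity>"
proof (cases "emeasure M E = \<infinity>")
  case True
  then show ?thesis
    using approx_PInf_emeasure_with_finite[OF assms(1) True, of 0] that by auto
qed (use assms that in \<open>auto simp: less_top\<close>)

lemma exists_norming_function_esssup: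
  assumes sf: "sigma_finite_measure M" and F [measurable]: "F \<in> borel_measurable M"
    and F_nonneg: "\<And>x. x \<in> space M \<Longrightarrow> 0 \<le> F x" and q0: "0 < q0"
    and lv: "lv < esssup M (\<lambda>x. ennreal (F x))"
  obtains u where "u \<in> borel_measurable M" "\<And>x. x \<in> space M \<Longrightarrow> 0 \<le> u x"
    "Lp_norm M (ereal q0) (\<lambda>x. ennreal (u x)) \<le> 1"
    "lv \<le> Lp_norm M (ereal q0) (\<lambda>x. ennreal (F x * u x))"
proof -
  define E where "E = {x\<in>space M. lv < ennreal (F x)}"
  have "E \<in> sets M"
    unfolding E_def by measurable
  moreover have "0 < emeasure M E"
    unfolding E_def using lv by (intro esssup_pos_measure) auto
  ultimately obtain B where [measurable]: "B \<in> sets M" and "B \<subseteq> E" "0 < emeasure M B" "emeasure M B < \<infinity>"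
    by (rule sigma_finite_measure.obtain_finite_positive_subset[OF sf])
  then have B: "emeasure M B = ennreal (measure M B)"
    by (simp add: emeasure_eq_ennreal_measure less_top)
  with \<open>0 < emeasure M B\<close> have "measure M B \<noteq> 0"
    by auto
  then have B_pos: "0 < measure M B"
    by (simp add: less_le)
  define u where "u x = measure M B powr (-1/q0) * indicator B x" for x
  have u_meas [measurable]: "u \<in> borel_measurable M"
    unfolding u_def by measurable
  have u_nonneg: "0 \<le> u x" for x
    unfolding u_def by simp
  have "epowr (ennreal (u x)) q0 = ennreal (1 / measure M B) * indicator B x" for x
    using B_pos q0 unfolding u_def by (auto simp: indicator_def powr_powr powr_minus_divide powr_divide)
  then have u_norm: "Lp_norm M (ereal q0) (\<lambda>x. ennreal (u x)) = 1"
    using B B_pos by (simp add: Lp_norm_ereal nn_integral_cmult_indicator ennreal_mult[symmetric])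
  have "lv = Lp_norm M (ereal q0) (\<lambda>x. lv * ennreal (u x))"
    using q0 u_norm by (subst Lp_norm_cmult) auto
  also have "\<dots> \<le> Lp_norm M (ereal q0) (\<lambda>x. ennreal (F x * u x))"
  proof (rule Lp_norm_mono)
    fix x assume x: "x \<in> space M"
    show "lv * ennreal (u x) \<le> ennreal (F x * u x)"
    proof (cases "x \<in> B")
      case True
      then have "lv \<le> ennreal (F x)"
        using \<open>B \<subseteq> E\<close> by (auto simp: E_def less_imp_le)
      then show ?thesis
        using F_nonneg[OF x] u_nonneg[of x] by (simp add: ennreal_mult mult_right_mono)
    qed (simp add: u_def)
  qed (use q0 in simp)
  finally show ?thesis
    using that[OF u_meas] u_nonneg u_norm by simp
qed

lemma nn_integral_epowr_truncation:
  assumes A: "range A \<subseteq> sets M" "(\<Union>i. A i) = space M" "incseq A"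
    and F [measurable]: "F \<in> borel_measurable M" and F_nonneg: "\<And>x. x \<in> space M \<Longrightarrow> 0 \<le> F x"
    and q: "0 < q"
  shows "(\<integral>\<^sup>+x. epowr (ennreal (F x)) q \<partial>M)
    = (SUP n. \<integral>\<^sup>+x. epowr (ennreal (min (F x) (real n) * indicator (A n) x)) q \<partial>M)"
proof -
  define G where "G n x = min (F x) (real n) * indicator (A n) x" for n x
  have [measurable]: "A i \<in> sets M" for i
    using A(1) by auto
  have A_space: "x \<in> A n \<Longrightarrow> x \<in> space M" for x n
    using A(2) by auto
  have G_le: "0 \<le> G n x \<and> G n x \<le> F x" if "x \<in> space M" for n x
    using F_nonneg[OF that] unfolding G_def by (auto simp: indicator_def)
  have "G n x \<le> G (Suc n) x" for n x
  proof (cases "x \<in> A n")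
    case True
    then have "x \<in> A (Suc n)"
      using A(3) by (auto simp: incseq_Suc_iff)
    with True show ?thesis
      unfolding G_def by auto
  next
    case False
    then show ?thesis
      using G_le[of x "Suc n"] A_space[of x "Suc n"] by (cases "x \<in> A (Suc n)") (auto simp: G_def)
  qed
  then have inc: "incseq (\<lambda>n x. epowr (ennreal (G n x)) q)"
    using q by (intro incseq_SucI le_funI epowr_mono ennreal_leI) auto
  have sup: "(SUP n. epowr (ennreal (G n x)) q) = epowr (ennreal (F x)) q" if x: "x \<in> space M" for x
  proof (rule antisym)
    show "(SUP n. epowr (ennreal (G n x)) q) \<le> epowr (ennreal (F x)) q"
      using G_le[OF x] q by (intro SUP_least epowr_mono ennreal_leI) auto
    obtain n1 where "x \<in> A n1"
      using A(2) x by auto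
    define n where "n = max n1 (nat \<lceil>F x\<rceil>)"
    have "x \<in> A n"
      using \<open>x \<in> A n1\<close> A(3) unfolding n_def incseq_def by (meson max.cobounded1 subsetD)
    moreover have "F x \<le> real n"
      unfolding n_def by (rule order_trans[OF real_nat_ceiling_ge]) simp
    ultimately have "G n x = F x"
      unfolding G_def by simp
    then show "epowr (ennreal (F x)) q \<le> (SUP n. epowr (ennreal (G n x)) q)"
      by (metis UNIV_I SUP_upper)
  qed
  have "(\<integral>\<^sup>+x. epowr (ennreal (F x)) q \<partial>M) = (\<integral>\<^sup>+x. (SUP n. epowr (ennreal (G n x)) q) \<partial>M)"
    using sup by (intro nn_integral_cong) auto
  also have "\<dots> = (SUP n. \<integral>\<^sup>+x. epowr (ennreal (G n x)) q \<partial>M)"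
    using inc by (intro nn_integral_monotone_convergence_SUP) (auto simp: G_def)
  finally show ?thesis
    by (simp add: G_def)
qed

lemma Lp_norm_approx_by_finite:
  assumes sf: "sigma_finite_measure M" and F [measurable]: "F \<in> borel_measurable M"
    and F_nonneg: "\<And>x. x \<in> space M \<Longrightarrow> 0 \<le> F x" and q: "0 < q"
    and lv: "lv < Lp_norm M (ereal q) (\<lambda>x. ennreal (F x))"
  obtains G where "G \<in> borel_measurable M" "\<And>x. x \<in> space M \<Longrightarrow> 0 \<le> G x \<and> G x \<le> F x"
    "(\<integral>\<^sup>+x. epowr (ennreal (G x)) q \<partial>M) < \<top>" "lv < Lp_norm M (ereal q) (\<lambda>x. ennreal (G x))"
proof -
  obtain A :: "nat \<Rightarrow> 'a set" where A: "range A \<subseteq> sets M" "(\<Union>i. A i) = space M"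
    "\<And>i. emeasure M (A i) \<noteq> \<infinity>" "incseq A"
    using sigma_finite_measure.sigma_finite_incseq[OF sf] by metis
  have [measurable]: "A i \<in> sets M" for i
    using A(1) by auto
  define G where "G n x = min (F x) (real n) * indicator (A n) x" for n x
  have G_meas [measurable]: "G n \<in> borel_measurable M" for n
    unfolding G_def by measurable
  have G_le: "0 \<le> G n x \<and> G n x \<le> F x" if "x \<in> space M" for n x
    using F_nonneg[OF that] unfolding G_def by (auto simp: indicator_def)
  have "epowr lv q < epowr (Lp_norm M (ereal q) (\<lambda>x. ennreal (F x))) q"
    using lv q by (simp add: epowr_less_iff)
  then obtain n where n: "epowr lv q < (\<integral>\<^sup>+x. epowr (ennreal (G n x)) q \<partial>M)"
    using q nn_integral_epowr_truncation[OF A(1,2,4) F F_nonneg q]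
    by (auto simp: Lp_norm_ereal less_SUP_iff G_def)
  have "(\<integral>\<^sup>+x. epowr (ennreal (G n x)) q \<partial>M) \<le> (\<integral>\<^sup>+x. ennreal (real n powr q) * indicator (A n) x \<partial>M)"
    using q F_nonneg
    by (intro nn_integral_mono) (auto simp: G_def indicator_def intro!: powr_mono2 ennreal_leI)
  also have "\<dots> < \<top>"
    using A(3)[of n] by (simp add: nn_integral_cmult_indicator ennreal_mult_less_top less_top)
  finally have fin: "(\<integral>\<^sup>+x. epowr (ennreal (G n x)) q \<partial>M) < \<top>" .
  have "epowr (epowr lv q) (1/q) < epowr (\<integral>\<^sup>+x. epowr (ennreal (G n x)) q \<partial>M) (1/q)"
    using n q by (subst epowr_less_iff) auto
  then have "lv < Lp_norm M (ereal q) (\<lambda>x. ennreal (G n x))"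
    using q by (simp add: Lp_norm_ereal)
  with fin show ?thesis
    using that[OF G_meas G_le] by blast
qed

lemma Holder_extremal_function:
  assumes G [measurable]: "G \<in> borel_measurable M" and G_nonneg: "\<And>x. x \<in> space M \<Longrightarrow> 0 \<le> G x"
    and I: "(\<integral>\<^sup>+x. epowr (ennreal (G x)) q \<partial>M) = ennreal I" "0 < I"
    and q: "0 < q" and q0: "0 < q0" and \<delta>: "0 < \<delta>" and exps: "1/q = 1/q0 - \<delta>"
  defines "u x \<equiv> G x powr (q * \<delta>) * I powr (-\<delta>)"
  shows "Lp_norm M (ereal (1/\<delta>)) (\<lambda>x. ennreal (u x)) = 1"
    and "Lp_norm M (ereal q0) (\<lambda>x. ennreal (G x * u x)) = Lp_norm M (ereal q) (\<lambda>x. ennreal (G x))"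
proof -
  have u_nonneg: "0 \<le> u x" for x
    unfolding u_def by simp
  have "epowr (ennreal (u x)) (1/\<delta>) = ennreal (1/I) * epowr (ennreal (G x)) q" if "x \<in> space M" for x
  proof -
    have "u x powr (1/\<delta>) = 1/I * G x powr q"
      unfolding u_def using \<delta> I G_nonneg[OF that]
      by (simp add: powr_mult powr_powr powr_minus_divide powr_divide)
    then show ?thesis
      using G_nonneg[OF that] u_nonneg I by (simp add: ennreal_mult[symmetric])
  qed
  then have "(\<integral>\<^sup>+x. epowr (ennreal (u x)) (1/\<delta>) \<partial>M) = ennreal (1/I) * ennreal I"
    unfolding I(1)[symmetric] by (subst nn_integral_cmult[symmetric]) (auto intro!: nn_integral_cong simp: u_def)
  then show "Lp_norm M (ereal (1/\<delta>)) (\<lambda>x. ennreal (u x)) = 1"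
    using I by (simp add: Lp_norm_ereal ennreal_mult[symmetric])
  have "epowr (ennreal (G x * u x)) q0 = ennreal (I powr (-\<delta> * q0)) * epowr (ennreal (G x)) q"
    if "x \<in> space M" for x
  proof -
    have "(G x * u x) powr q0 = I powr (-\<delta> * q0) * G x powr q"
    proof (cases "G x = 0")
      case False
      then have "0 < G x"
        using G_nonneg[OF that] by simp
      moreover have "q0 + q * \<delta> * q0 = q"
        using exps q q0 by (simp add: field_simps)
      ultimately show ?thesis
        unfolding u_def using I by (simp add: powr_mult powr_powr powr_add[symmetric])
    qed (use q0 in simp)
    then show ?thesis
      using G_nonneg[OF that] u_nonneg[of x] by (simp add: ennreal_mult[symmetric])
  qed
  then have "(\<integral>\<^sup>+x. epowr (ennreal (G x * u x)) q0 \<partial>M) = ennreal (I powr (-\<delta> * q0)) * ennreal I"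
    unfolding I(1)[symmetric] by (subst nn_integral_cmult[symmetric]) (auto intro!: nn_integral_cong simp: u_def)
  also have "\<dots> = ennreal (I powr (1 - \<delta> * q0))"
    using I by (simp add: ennreal_mult[symmetric] powr_diff powr_minus_divide)
  finally have "Lp_norm M (ereal q0) (\<lambda>x. ennreal (G x * u x)) = ennreal (I powr ((1 - \<delta> * q0) * (1/q0)))"
    using I by (simp add: Lp_norm_ereal powr_powr)
  also have "(1 - \<delta> * q0) * (1/q0) = 1/q"
    using exps q0 by (simp add: field_simps)
  finally show "Lp_norm M (ereal q0) (\<lambda>x. ennreal (G x * u x)) = Lp_norm M (ereal q) (\<lambda>x. ennreal (G x))"
    using I by (simp add: Lp_norm_ereal)
qed

lemma exists_norming_function_finite:
  assumes sf: "sigma_finite_measure M" and F [measurable]: "F \<in> borel_measurable M"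
    and F_nonneg: "\<And>x. x \<in> space M \<Longrightarrow> 0 \<le> F x" and q: "0 < q" and q0: "0 < q0" and \<delta>: "0 < \<delta>"
    and exps: "1/q = 1/q0 - \<delta>" and lv: "lv < Lp_norm M (ereal q) (\<lambda>x. ennreal (F x))"
  obtains u where "u \<in> borel_measurable M" "\<And>x. x \<in> space M \<Longrightarrow> 0 \<le> u x"
    "Lp_norm M (ereal (1/\<delta>)) (\<lambda>x. ennreal (u x)) \<le> 1"
    "lv \<le> Lp_norm M (ereal q0) (\<lambda>x. ennreal (F x * u x))"
proof -
  obtain G where G [measurable]: "G \<in> borel_measurable M"
    and G_le: "\<And>x. x \<in> space M \<Longrightarrow> 0 \<le> G x \<and> G x \<le> F x"
    and fin: "(\<integral>\<^sup>+x. epowr (ennreal (G x)) q \<partial>M) < \<top>"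
    and lv_G: "lv < Lp_norm M (ereal q) (\<lambda>x. ennreal (G x))"
    using Lp_norm_approx_by_finite[OF sf F F_nonneg q lv] by blast
  have "(\<integral>\<^sup>+x. epowr (ennreal (G x)) q \<partial>M) \<noteq> 0"
    using lv_G q by (auto simp: Lp_norm_ereal)
  then obtain I where I: "(\<integral>\<^sup>+x. epowr (ennreal (G x)) q \<partial>M) = ennreal I" "0 < I"
    using fin by (metis ennreal_cases ennreal_eq_0_iff less_top not_le)
  define u where "u x = G x powr (q * \<delta>) * I powr (-\<delta>)" for x
  have u_meas [measurable]: "u \<in> borel_measurable M"
    unfolding u_def by measurable
  note extremal = Holder_extremal_function[OF G _ I q q0 \<delta> exps, folded u_def]
  have "lv < Lp_norm M (ereal q0) (\<lambda>x. ennreal (G x * u x))"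
    using lv_G G_le by (simp add: extremal)
  also have "\<dots> \<le> Lp_norm M (ereal q0) (\<lambda>x. ennreal (F x * u x))"
    using G_le q0 by (intro Lp_norm_mono ennreal_leI mult_right_mono) (auto simp: u_def)
  finally show ?thesis
    using that[OF u_meas] G_le extremal by (simp add: u_def)
qed

lemma exists_norming_function:
  assumes sf: "sigma_finite_measure M" and F [measurable]: "F \<in> borel_measurable M"
    and F_nonneg: "\<And>x. x \<in> space M \<Longrightarrow> 0 \<le> F x" and q: "0 < q" and q0: "0 < q0" and \<delta>: "0 < \<delta>"
    and exps: "inv_exp q = 1/q0 - \<delta>" and lv: "lv < Lp_norm M q (\<lambda>x. ennreal (F x))"
  obtains u where "u \<in> borel_measurable M" "\<And>x. x \<in> space M \<Longrightarrow> 0 \<le> u x"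
    "Lp_norm M (ereal (1/\<delta>)) (\<lambda>x. ennreal (u x)) \<le> 1"
    "lv \<le> Lp_norm M (ereal q0) (\<lambda>x. ennreal (F x * u x))"
proof (cases q)
  case (real q')
  then show ?thesis
    using exists_norming_function_finite[OF sf F F_nonneg _ q0 \<delta>] that q exps lv by auto
next
  case PInf
  then have "ereal q0 = ereal (1/\<delta>)"
    using exps q0 \<delta> by (simp add: field_simps)
  then show ?thesis
    using exists_norming_function_esssup[OF sf F F_nonneg q0] that lv PInf by (auto simp: Lp_norm_def)
qed (use q in auto)

section \<open>Construction of the weights\<close>

lemma apc_exponent_identity:
  fixes m a D \<beta> \<theta> i s0 A :: real
  assumes m: "0 < m" and a: "0 < a" and D: "0 < D" and e: "1/s0 + i - \<beta> = \<theta> * A"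
  shows "m powr (-1/s0 - i) * a powr \<beta> * (a / (m * D)) powr (-\<beta>) = D powr \<beta> * (m powr (-A)) powr \<theta>"
proof -
  have "m powr (-1/s0 - i) * a powr \<beta> * (a / (m * D)) powr (-\<beta>)
      = (m powr (-1/s0 - i) * m powr \<beta>) * D powr \<beta> * (a powr \<beta> / a powr \<beta>)"
    using m a D by (simp add: powr_minus_divide powr_divide powr_mult field_simps)
  also have "m powr (-1/s0 - i) * m powr \<beta> = m powr (-A * \<theta>)"
    using e by (simp add: powr_add[symmetric] algebra_simps)
  finally show ?thesis
    using m a by (simp add: powr_powr mult.commute)
qed

locale extrapolation_setting =
  fixes M :: "'a measure" and \<U> :: "'a set set" and s r s0 :: real and r0 :: ereal
    and w :: "'a \<Rightarrow> real" and c :: "ereal \<Rightarrow> real"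
  assumes basis: "is_basis M \<U>"
    and s_pos: "0 < s" and r_pos: "0 < r" and s0_pos: "0 < s0" and r0_pos: "0 < r0"
    and exps: "1 / s - 1 / s0 = inv_exp r0 - 1 / r"
    and exps_neg: "inv_exp r0 - 1 / r < 0"
    and w_weight: "is_weight M w"
    and w_fin: "apc M \<U> (ereal s) (ereal r) w w < \<top>"
    and c_ge: "\<And>t. 1 < t \<Longrightarrow> 1 \<le> c t"
    and maxop_norm_le: "\<And>t v. 1 < t \<Longrightarrow> is_weight M v \<Longrightarrow>
        maxop_norm M \<U> t v \<le> ennreal (c t) * epowr (apc_p M \<U> t v) (real_of_ereal (conj_exp t))"
    and nonempty: "space M \<noteq> {}"
begin

text \<open>\<open>\<tau>\<close> and \<open>\<beta>\<close> are the exponents \<open>t\<close> and \<open>\<beta>\<close> of the theorem; \<open>\<delta>\<close> is the common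
  value of \<open>1/p - 1/p\<^sub>0\<close>, \<open>1/s - 1/s\<^sub>0\<close>, \<open>1/r\<^sub>0 - 1/r\<close> with the sign reversed.
  \<open>w_const\<close> is \<open>[w]\<^sub>(\<^sub>s\<^sub>,\<^sub>r\<^sub>)\<close>, \<open>maxop_const\<close> bounds the maximal operator on \<open>L\<^sup>\<tau>\<close> with
  weight \<open>w_dual\<close>, and \<open>extrapolation_const \<kappa>\<close> is the argument of \<open>\<phi>\<close> in the theorem.\<close>
definition "\<delta> = 1/r - inv_exp r0"
definition "\<rho> = 1 / (1/s + 1/r)"
definition "\<tau> = (1/s + 1/r) / (1/r)"
definition "\<tau>' = \<tau> / (\<tau> - 1)"
definition "\<beta> = (1/s + 1/r) * (1/r - inv_exp r0) / (1/r)"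
definition "\<theta> = r * inv_exp r0"
definition "w_const = enn2real (apc M \<U> (ereal s) (ereal r) w w)"
definition "w_dual x = w x powr (-\<rho>)"
definition "maxop_const = c (ereal \<tau>) * w_const powr s"
definition "extrapolation_const \<kappa> = (\<kappa> / (\<kappa> - 1) * c (ereal \<tau>)) powr \<beta> * w_const powr (s / s0)"

lemma w_measurable [measurable]: "w \<in> borel_measurable M"
  and w_pos: "x \<in> space M \<Longrightarrow> 0 < w x"
  using w_weight by (auto simp: is_weight_def)

lemma \<delta>_pos: "0 < \<delta>"
  using exps_neg by (simp add: \<delta>_def)

lemma \<rho>_pos: "0 < \<rho>"
  using s_pos r_pos by (simp add: \<rho>_def add_pos_pos)

lemma \<tau>_gt_1: "1 < \<tau>"
  using s_pos r_pos by (simp add: \<tau>_def field_simps)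

lemma \<tau>'_gt_1: "1 < \<tau>'"
  using \<tau>_gt_1 by (simp add: \<tau>'_def field_simps)

lemma \<beta>_eq: "\<beta> = \<tau> * \<delta>"
  by (simp add: \<beta>_def \<tau>_def \<delta>_def)

lemma \<beta>_pos: "0 < \<beta>"
  using \<tau>_gt_1 \<delta>_pos by (simp add: \<beta>_eq)

lemma \<theta>_nonneg: "0 \<le> \<theta>"
  using inv_exp_nonneg[OF r0_pos] r_pos by (simp add: \<theta>_def)

lemma \<theta>_eq: "\<theta> = 1 - r * \<delta>"
  using r_pos by (simp add: \<theta>_def \<delta>_def field_simps)

lemma sum_inv_s_r_pos: "0 < 1/s + 1/r"
  using s_pos r_pos by (simp add: add_pos_pos)

lemma \<rho>_\<tau>: "\<rho> * \<tau> = r"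
  using sum_inv_s_r_pos by (simp add: \<rho>_def \<tau>_def)

lemma \<rho>_\<tau>': "\<rho> * \<tau>' = s"
proof -
  have "\<tau> - 1 = r / s"
    using s_pos r_pos by (simp add: \<tau>_def field_simps)
  then have "\<tau>' = (1/s + 1/r) * s"
    using s_pos r_pos by (simp add: \<tau>'_def \<tau>_def)
  then show ?thesis
    using sum_inv_s_r_pos by (simp add: \<rho>_def)
qed

lemma \<rho>_\<beta>: "\<rho> * \<beta> = r * \<delta>"
  using sum_inv_s_r_pos by (simp add: \<rho>_def \<beta>_def \<delta>_def)

lemma s0_eq: "1/s0 = 1/s + \<delta>"
  using exps by (simp add: \<delta>_def)

lemma s0_eq': "1/s0 = \<beta> + \<theta> / s"
  using s_pos r_pos by (simp add: s0_eq \<beta>_eq \<theta>_eq \<tau>_def field_simps)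

lemma s_div_s0: "s / s0 = s * \<beta> + \<theta>"
proof -
  have "s / s0 = s * (1/s0)"
    by simp
  also have "\<dots> = s * \<beta> + \<theta>"
    using s_pos unfolding s0_eq' by (simp add: distrib_left)
  finally show ?thesis .
qed

lemma \<delta>_eq: "1/\<delta> = \<tau> / \<beta>"
  using \<delta>_pos \<tau>_gt_1 by (simp add: \<beta>_eq)

lemma \<tau>_conjugate: "1/\<tau> + 1/\<tau>' = 1"
  using \<tau>_gt_1 by (simp add: \<tau>'_def field_simps)

lemma \<rho>_inverse: "\<rho> * (1/s + 1/r) = 1"
  using sum_inv_s_r_pos by (simp add: \<rho>_def)

lemma apc_exponents: "1/s0 + inv_exp r0 - \<beta> = \<theta> * (1/s + 1/r)"
  using s_pos r_pos by (simp add: s0_eq \<beta>_eq \<theta>_def \<tau>_def \<delta>_def field_simps)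

lemma \<theta>_eq_0_iff: "\<theta> = 0 \<longleftrightarrow> r0 = \<infinity>"
  unfolding \<theta>_def using r_pos r0_pos by (cases r0) auto

lemma conj_exp_\<tau>: "conj_exp (ereal \<tau>) = ereal \<tau>'"
  using \<tau>_gt_1 by (simp add: conj_exp_def \<tau>'_def)

lemma w_dual_weight: "is_weight M w_dual"
  unfolding is_weight_def w_dual_def by (simp, metis less_irrefl w_pos)

lemma w_dual_measurable [measurable]: "w_dual \<in> borel_measurable M"
  and w_dual_pos: "x \<in> space M \<Longrightarrow> 0 < w_dual x"
  using w_dual_weight by (auto simp: is_weight_def)

lemma apc_w_eq: "apc M \<U> (ereal s) (ereal r) w w = ennreal w_const"
  using w_fin by (simp add: w_const_def less_top)

lemma Lp_norm_restrict_basis_pos: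
  assumes "U \<in> \<U>" "0 < p" "f \<in> borel_measurable M" "\<And>x. x \<in> space M \<Longrightarrow> 0 < f x"
  shows "Lp_norm (restrict_space M U) (ereal p) (\<lambda>x. ennreal (f x)) \<noteq> 0"
proof
  have U [measurable]: "U \<in> sets M"
    using is_basis_sets[OF basis assms(1)] .
  assume "Lp_norm (restrict_space M U) (ereal p) (\<lambda>x. ennreal (f x)) = 0"
  then have "AE x in restrict_space M U. ennreal (f x) = 0"
    using assms by (subst (asm) Lp_norm_eq_0_iff) (auto intro: measurable_restrict_space1)
  then have "AE x in M. x \<in> U \<longrightarrow> ennreal (f x) = 0"
    by (simp add: AE_restrict_space_iff)
  with AE_space have "AE x in M. x \<notin> U"
    by eventually_elim (use assms(4) in \<open>force simp: ennreal_eq_0_iff\<close>)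
  then have "emeasure M U = 0"
    by (simp add: AE_iff_null_sets null_setsD1)
  then show False
    using is_basis_emeasure_pos[OF basis assms(1)] by simp
qed

lemma w_const_pos: "0 < w_const"
proof -
  obtain x where "x \<in> space M"
    using nonempty by auto
  then obtain U where U: "U \<in> \<U>"
    using basis unfolding is_basis_def by blast
  have "0 < ennreal (measure M U powr (- inv_exp (ereal s) - inv_exp (ereal r)))
      * Lp_norm (restrict_space M U) (ereal s) (\<lambda>x. ennreal (w x))
      * Lp_norm (restrict_space M U) (ereal r) (\<lambda>x. ennreal (1 / w x))"
    using Lp_norm_restrict_basis_pos[OF U s_pos, of w] Lp_norm_restrict_basis_pos[OF U r_pos, of "\<lambda>x. 1 / w x"]
      w_pos is_basis_measure_pos[OF basis U]
    by (simp add: zero_less_iff_neq_zero)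
  also have "\<dots> \<le> apc M \<U> (ereal s) (ereal r) w w"
    unfolding apc_def using U by (rule SUP_upper)
  finally show ?thesis
    by (simp add: apc_w_eq)
qed

lemma apc_p_w_dual_le: "apc_p M \<U> (ereal \<tau>) w_dual \<le> epowr (apc M \<U> (ereal s) (ereal r) w w) \<rho>"
proof -
  let ?A = "\<lambda>U. ennreal (measure M U powr (- inv_exp (ereal s) - inv_exp (ereal r)))
    * Lp_norm (restrict_space M U) (ereal s) (\<lambda>x. ennreal (w x))
    * Lp_norm (restrict_space M U) (ereal r) (\<lambda>x. ennreal (1 / w x))"
  have "ennreal (measure M U powr (- inv_exp (ereal \<tau>) - inv_exp (ereal \<tau>')))
      * Lp_norm (restrict_space M U) (ereal \<tau>) (\<lambda>x. ennreal (w_dual x))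
      * Lp_norm (restrict_space M U) (ereal \<tau>') (\<lambda>x. ennreal (1 / w_dual x)) = epowr (?A U) \<rho>" for U
  proof -
    let ?R = "restrict_space M U"
    have sp: "x \<in> space ?R \<Longrightarrow> x \<in> space M" for x
      by (simp add: space_restrict_space)
    have "Lp_norm ?R (ereal \<tau>) (\<lambda>x. ennreal (w_dual x)) = Lp_norm ?R (ereal \<tau>) (\<lambda>x. epowr (ennreal (1 / w x)) \<rho>)"
      using w_pos sp by (intro Lp_norm_cong) (simp add: w_dual_def powr_minus_divide powr_divide less_imp_le)
    also have "\<dots> = epowr (Lp_norm ?R (ereal r) (\<lambda>x. ennreal (1 / w x))) \<rho>"
      using \<tau>_gt_1 \<rho>_pos \<rho>_\<tau> by (subst Lp_norm_epowr) (auto simp: mult.commute)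
    finally have w_dual: "Lp_norm ?R (ereal \<tau>) (\<lambda>x. ennreal (w_dual x)) = \<dots>" .
    have "Lp_norm ?R (ereal \<tau>') (\<lambda>x. ennreal (1 / w_dual x)) = Lp_norm ?R (ereal \<tau>') (\<lambda>x. epowr (ennreal (w x)) \<rho>)"
      using w_pos sp by (intro Lp_norm_cong) (simp add: w_dual_def powr_minus_divide less_imp_le)
    also have "\<dots> = epowr (Lp_norm ?R (ereal s) (\<lambda>x. ennreal (w x))) \<rho>"
      using \<tau>'_gt_1 \<rho>_pos \<rho>_\<tau>' by (subst Lp_norm_epowr) (auto simp: mult.commute)
    finally have inverse_w_dual: "Lp_norm ?R (ereal \<tau>') (\<lambda>x. ennreal (1 / w_dual x)) = \<dots>" .
    have "- inv_exp (ereal \<tau>) - inv_exp (ereal \<tau>') = (- inv_exp (ereal s) - inv_exp (ereal r)) * \<rho>"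
      using \<tau>_conjugate \<rho>_inverse by (simp add: algebra_simps)
    then have "ennreal (measure M U powr (- inv_exp (ereal \<tau>) - inv_exp (ereal \<tau>')))
        = epowr (ennreal (measure M U powr (- inv_exp (ereal s) - inv_exp (ereal r)))) \<rho>"
      by (simp add: powr_powr)
    then show ?thesis
      unfolding w_dual inverse_w_dual using \<rho>_pos by (simp add: epowr_mult ac_simps)
  qed
  then have "apc_p M \<U> (ereal \<tau>) w_dual = (SUP U\<in>\<U>. epowr (?A U) \<rho>)"
    unfolding apc_p_def apc_def conj_exp_\<tau> by simp
  also have "\<dots> \<le> epowr (SUP U\<in>\<U>. ?A U) \<rho>"
    using \<rho>_pos by (intro SUP_least epowr_mono SUP_upper) auto
  finally show ?thesis
    by (simp add: apc_def)
qed

lemma maxop_const_pos: "0 < maxop_const"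
  using c_ge[of "ereal \<tau>"] \<tau>_gt_1 w_const_pos by (simp add: maxop_const_def)

lemma maxop_norm_w_dual_le: "maxop_norm M \<U> (ereal \<tau>) w_dual \<le> ennreal maxop_const"
proof -
  have "maxop_norm M \<U> (ereal \<tau>) w_dual \<le> ennreal (c (ereal \<tau>)) * epowr (apc_p M \<U> (ereal \<tau>) w_dual) \<tau>'"
    using maxop_norm_le[of "ereal \<tau>" w_dual] \<tau>_gt_1 w_dual_weight by (simp add: conj_exp_\<tau>)
  also have "\<dots> \<le> ennreal (c (ereal \<tau>)) * epowr (epowr (apc M \<U> (ereal s) (ereal r) w w) \<rho>) \<tau>'"
    using apc_p_w_dual_le \<tau>'_gt_1 by (intro mult_left_mono epowr_mono) auto
  also have "\<dots> = ennreal maxop_const"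
    using \<rho>_\<tau>' w_const_pos c_ge[of "ereal \<tau>"] \<tau>_gt_1
    by (simp add: apc_w_eq epowr_epowr powr_powr maxop_const_def ennreal_mult)
  finally show ?thesis .
qed

definition "weight_factor V x = V x powr \<beta> * w x powr (- (\<rho> * \<beta>))"

lemma weight_factor_eq:
  assumes "x \<in> space M"
  shows "w x * weight_factor V x = V x powr \<beta> * w x powr \<theta>"
proof -
  have "w x * w x powr (- (\<rho> * \<beta>)) = w x powr (1 - \<rho> * \<beta>)"
    using w_pos[OF assms] by (simp add: powr_diff powr_minus_divide)
  then show ?thesis
    using \<theta>_eq \<rho>_\<beta> by (simp add: weight_factor_def mult.left_commute)
qed

lemma borel_measurable_weight_factor [measurable]:
  "V \<in> borel_measurable M \<Longrightarrow> weight_factor V \<in> borel_measurable M"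
  unfolding weight_factor_def by simp

lemma Lp_norm_weight_factor:
  assumes "\<And>x. x \<in> space M \<Longrightarrow> 0 < V x"
  shows "Lp_norm M (ereal (1/\<delta>)) (\<lambda>x. ennreal (weight_factor V x))
    = epowr (Lp_norm M (ereal \<tau>) (\<lambda>x. ennreal (V x * w_dual x))) \<beta>"
proof -
  have "ennreal (weight_factor V x) = epowr (ennreal (V x * w_dual x)) \<beta>" if "x \<in> space M" for x
    using assms[OF that] w_pos[OF that]
    by (simp add: weight_factor_def w_dual_def powr_mult powr_powr less_imp_le)
  then have "Lp_norm M (ereal (1/\<delta>)) (\<lambda>x. ennreal (weight_factor V x))
      = Lp_norm M (ereal (1/\<delta>)) (\<lambda>x. epowr (ennreal (V x * w_dual x)) \<beta>)"
    by (rule Lp_norm_cong)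
  also have "\<dots> = epowr (Lp_norm M (ereal (1/\<delta> * \<beta>)) (\<lambda>x. ennreal (V x * w_dual x))) \<beta>"
    using \<delta>_pos \<beta>_pos by (intro Lp_norm_epowr) auto
  finally show ?thesis
    using \<delta>_eq \<beta>_pos by simp
qed

text \<open>\<open>weight_factor_inv\<close> inverts \<open>weight_factor\<close>; the weights are built by applying
  \<open>weight_factor\<close> to an \<open>A\<^sub>1\<close>-majorant of \<open>weight_factor_inv u\<close>.\<close>
definition "weight_factor_inv u x = u x powr (1/\<beta>) * w x powr \<rho>"

lemma borel_measurable_weight_factor_inv [measurable]:
  "u \<in> borel_measurable M \<Longrightarrow> weight_factor_inv u \<in> borel_measurable M"
  unfolding weight_factor_inv_def by simp

lemma weight_factor_inv_eq_0_iff: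
  "x \<in> space M \<Longrightarrow> 0 \<le> u x \<Longrightarrow> weight_factor_inv u x = 0 \<longleftrightarrow> u x = 0"
  using w_pos[of x] by (auto simp: weight_factor_inv_def)

lemma le_weight_factor:
  assumes "x \<in> space M" "0 \<le> u x" "weight_factor_inv u x \<le> V x"
  shows "u x \<le> weight_factor V x"
proof -
  have "u x = weight_factor_inv u x powr \<beta> * w x powr (- (\<rho> * \<beta>))"
    using assms w_pos[OF assms(1)] \<beta>_pos
    by (simp add: weight_factor_inv_def powr_mult powr_powr powr_add[symmetric])
  also have "\<dots> \<le> weight_factor V x"
    unfolding weight_factor_def using assms \<beta>_pos
    by (intro mult_right_mono powr_mono2) (auto simp: weight_factor_inv_def)
  finally show ?thesis .
qed

lemma Lp_norm_weight_factor_inv: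
  assumes "\<And>x. x \<in> space M \<Longrightarrow> 0 \<le> u x"
  shows "Lp_norm M (ereal \<tau>) (\<lambda>x. ennreal (weight_factor_inv u x * w_dual x))
    = epowr (Lp_norm M (ereal (1/\<delta>)) (\<lambda>x. ennreal (u x))) (1/\<beta>)"
proof -
  have "weight_factor_inv u x * w_dual x = u x powr (1/\<beta>)" if "x \<in> space M" for x
    using w_pos[OF that] by (simp add: weight_factor_inv_def w_dual_def mult.assoc powr_add[symmetric])
  then have "Lp_norm M (ereal \<tau>) (\<lambda>x. ennreal (weight_factor_inv u x * w_dual x))
      = Lp_norm M (ereal \<tau>) (\<lambda>x. epowr (ennreal (u x)) (1/\<beta>))"
    using assms by (intro Lp_norm_cong) simp
  also have "\<dots> = epowr (Lp_norm M (ereal (1/\<delta>)) (\<lambda>x. ennreal (u x))) (1/\<beta>)"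
    using \<tau>_gt_1 \<beta>_pos \<delta>_eq by (subst Lp_norm_epowr) auto
  finally show ?thesis .
qed

context
  fixes V :: "'a \<Rightarrow> real" and D a :: real and Q :: "'a set"
  assumes V [measurable]: "V \<in> borel_measurable M" and V_pos: "\<And>x. x \<in> space M \<Longrightarrow> 0 < V x"
    and D: "0 < D" and Q: "Q \<in> \<U>"
    and a: "(\<integral>\<^sup>+y\<in>Q. ennreal (V y) \<partial>M) = ennreal a" "0 < a"
    and V_lower: "AE x in restrict_space M Q. a / (measure M Q * D) \<le> V x"

begin

private lemma Q_sets [measurable]: "Q \<in> sets M"
  using is_basis_sets[OF basis Q] .

private lemma in_space: "x \<in> space (restrict_space M Q) \<Longrightarrow> x \<in> space M"
  using sets.sets_into_space[OF Q_sets] by (auto simp: space_restrict_space)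

private lemma measurable_restrict [measurable (raw)]:
  "f \<in> borel_measurable M \<Longrightarrow> f \<in> borel_measurable (restrict_space M Q)"
  by (rule measurable_restrict_space1)

lemma Lp_norm_restrict_powr_\<beta>:
  "Lp_norm (restrict_space M Q) (ereal (1/\<beta>)) (\<lambda>x. ennreal (V x powr \<beta>)) = ennreal (a powr \<beta>)"
proof -
  have "Lp_norm (restrict_space M Q) (ereal (1/\<beta>)) (\<lambda>x. ennreal (V x powr \<beta>))
      = Lp_norm (restrict_space M Q) (ereal (1/\<beta>)) (\<lambda>x. epowr (ennreal (V x)) \<beta>)"
    using V_pos in_space by (intro Lp_norm_cong) (simp add: less_imp_le)
  also have "\<dots> = epowr (Lp_norm (restrict_space M Q) (ereal 1) (\<lambda>x. ennreal (V x))) \<beta>"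
    using \<beta>_pos Lp_norm_epowr[of "1/\<beta>" \<beta>] by simp
  also have "Lp_norm (restrict_space M Q) (ereal 1) (\<lambda>x. ennreal (V x)) = ennreal a"
    unfolding Lp_norm_one a(1)[symmetric]
    by (simp add: nn_integral_restrict_space mult.commute)
  finally show ?thesis
    using a by simp
qed

text \<open>On \<open>Q\<close> the new weight is \<open>V\<^sup>\<beta> w\<^sup>\<theta>\<close>: the first factor is controlled by the average of
  \<open>V\<close> over \<open>Q\<close> (Hoelder with \<open>1/s\<^sub>0 = \<beta> + \<theta>/s\<close>), its inverse by the lower bound of
  \<open>V\<close> on \<open>Q\<close>.\<close>
lemma Lp_norm_restrict_weight_le:
  assumes "0 < \<theta>"
  shows "Lp_norm (restrict_space M Q) (ereal s0) (\<lambda>x. ennreal (w x * weight_factor V x))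
    \<le> ennreal (a powr \<beta>) * epowr (Lp_norm (restrict_space M Q) (ereal s) (\<lambda>x. ennreal (w x))) \<theta>"
proof -
  have "Lp_norm (restrict_space M Q) (ereal s0) (\<lambda>x. ennreal (w x * weight_factor V x))
      = Lp_norm (restrict_space M Q) (ereal s0) (\<lambda>x. ennreal (V x powr \<beta>) * epowr (ennreal (w x)) \<theta>)"
    using in_space w_pos by (intro Lp_norm_cong) (simp add: weight_factor_eq ennreal_mult less_imp_le)
  also have "\<dots> \<le> Lp_norm (restrict_space M Q) (ereal (1/\<beta>)) (\<lambda>x. ennreal (V x powr \<beta>))
      * Lp_norm (restrict_space M Q) (ereal (s/\<theta>)) (\<lambda>x. epowr (ennreal (w x)) \<theta>)"
    using \<beta>_pos s0_eq' assms s0_pos s_pos by (intro Lp_norm_Holder) auto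
  also have "Lp_norm (restrict_space M Q) (ereal (s/\<theta>)) (\<lambda>x. epowr (ennreal (w x)) \<theta>)
      = epowr (Lp_norm (restrict_space M Q) (ereal s) (\<lambda>x. ennreal (w x))) \<theta>"
    using assms s_pos Lp_norm_epowr[of "s/\<theta>" \<theta>] by simp
  finally show ?thesis
    by (simp add: Lp_norm_restrict_powr_\<beta>)
qed

lemma Lp_norm_restrict_inverse_weight_le:
  assumes "0 < \<theta>"
  shows "Lp_norm (restrict_space M Q) r0 (\<lambda>x. ennreal (1 / (w x * weight_factor V x)))
    \<le> ennreal ((a / (measure M Q * D)) powr (-\<beta>))
      * epowr (Lp_norm (restrict_space M Q) (ereal r) (\<lambda>x. ennreal (1 / w x))) \<theta>"
proof -
  let ?lo = "a / (measure M Q * D)"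
  have lo: "0 < ?lo"
    using a D is_basis_measure_pos[OF basis Q] by simp
  have "r0 \<noteq> \<infinity>"
    using assms by (auto simp: \<theta>_def)
  then obtain r0' where r0': "r0 = ereal r0'" "0 < r0'"
    using r0_pos by (cases r0) auto
  then have "r0' * \<theta> = r"
    unfolding \<theta>_def by simp
  have "AE x in restrict_space M Q.
      ennreal (1 / (w x * weight_factor V x)) \<le> ennreal (?lo powr (-\<beta>)) * epowr (ennreal (1 / w x)) \<theta>"
    using V_lower AE_space
  proof eventually_elim
    case (elim x)
    then have x: "x \<in> space M"
      using in_space by blast
    have "1 / (w x * weight_factor V x) = V x powr (-\<beta>) * (1 / w x) powr \<theta>"
      using weight_factor_eq[OF x] V_pos[OF x] w_pos[OF x] by (simp add: powr_minus_divide powr_divide)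
    also have "\<dots> \<le> ?lo powr (-\<beta>) * (1 / w x) powr \<theta>"
      using elim lo \<beta>_pos by (intro mult_right_mono powr_mono2') auto
    finally show ?case
      using w_pos[OF x] lo by (simp add: ennreal_mult[symmetric] ennreal_leI)
  qed
  then have "Lp_norm (restrict_space M Q) r0 (\<lambda>x. ennreal (1 / (w x * weight_factor V x)))
      \<le> Lp_norm (restrict_space M Q) (ereal r0') (\<lambda>x. ennreal (?lo powr (-\<beta>)) * epowr (ennreal (1 / w x)) \<theta>)"
    unfolding r0'(1) using r0'(2) by (intro Lp_norm_mono_AE) auto
  also have "\<dots> = ennreal (?lo powr (-\<beta>)) * epowr (Lp_norm (restrict_space M Q) (ereal r) (\<lambda>x. ennreal (1 / w x))) \<theta>"
    using r0' \<open>r0' * \<theta> = r\<close> assms by (simp add: Lp_norm_cmult Lp_norm_epowr)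
  finally show ?thesis .
qed

lemma Lp_norm_restrict_weight_eq:
  assumes "\<theta> = 0"
  shows "Lp_norm (restrict_space M Q) (ereal s0) (\<lambda>x. ennreal (w x * weight_factor V x)) = ennreal (a powr \<beta>)"
proof -
  have "ereal s0 = ereal (1/\<beta>)"
    using s0_eq' assms s0_pos \<beta>_pos by (simp add: field_simps)
  moreover have "Lp_norm (restrict_space M Q) (ereal s0) (\<lambda>x. ennreal (w x * weight_factor V x))
      = Lp_norm (restrict_space M Q) (ereal s0) (\<lambda>x. ennreal (V x powr \<beta>))"
  proof (intro Lp_norm_cong)
    fix x assume "x \<in> space (restrict_space M Q)"
    then have "x \<in> space M"
      using in_space by blast
    then show "ennreal (w x * weight_factor V x) = ennreal (V x powr \<beta>)"
      using assms w_pos[of x] by (simp add: weight_factor_eq)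
  qed
  ultimately show ?thesis
    by (simp add: Lp_norm_restrict_powr_\<beta>)
qed

lemma Lp_norm_restrict_inverse_weight_le_esssup:
  assumes "\<theta> = 0"
  shows "Lp_norm (restrict_space M Q) r0 (\<lambda>x. ennreal (1 / (w x * weight_factor V x)))
    \<le> ennreal ((a / (measure M Q * D)) powr (-\<beta>))"
proof -
  let ?lo = "a / (measure M Q * D)"
  have lo: "0 < ?lo"
    using a D is_basis_measure_pos[OF basis Q] by simp
  have "AE x in restrict_space M Q. ennreal (1 / (w x * weight_factor V x)) \<le> ennreal (?lo powr (-\<beta>))"
    using V_lower AE_space
  proof eventually_elim
    case (elim x)
    then have x: "x \<in> space M"
      using in_space by blast
    have "1 / (w x * weight_factor V x) = V x powr (-\<beta>)"
      using weight_factor_eq[OF x] assms V_pos[OF x] w_pos[OF x] by (simp add: powr_minus_divide)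
    also have "\<dots> \<le> ?lo powr (-\<beta>)"
      using elim lo \<beta>_pos by (intro powr_mono2') auto
    finally show ?case
      by (rule ennreal_leI)
  qed
  then have "esssup (restrict_space M Q) (\<lambda>x. ennreal (1 / (w x * weight_factor V x))) \<le> ennreal (?lo powr (-\<beta>))"
    by (intro esssup_I) auto
  then show ?thesis
    using \<theta>_eq_0_iff assms by (simp add: Lp_norm_def)
qed

lemma apc_term_weight_factor_le:
  "ennreal (measure M Q powr (- inv_exp (ereal s0) - inv_exp r0))
     * Lp_norm (restrict_space M Q) (ereal s0) (\<lambda>x. ennreal (w x * weight_factor V x))
     * Lp_norm (restrict_space M Q) r0 (\<lambda>x. ennreal (1 / (w x * weight_factor V x)))
   \<le> ennreal (D powr \<beta> * w_const powr \<theta>)"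
proof -
  define m where "m = measure M Q"
  define Y where "Y = Lp_norm (restrict_space M Q) (ereal s) (\<lambda>x. ennreal (w x))"
  define Z where "Z = Lp_norm (restrict_space M Q) (ereal r) (\<lambda>x. ennreal (1 / w x))"
  have m: "0 < m"
    unfolding m_def using is_basis_measure_pos[OF basis Q] .
  have "ennreal (m powr (- inv_exp (ereal s) - inv_exp (ereal r))) * Y * Z \<le> ennreal w_const"
    unfolding Y_def Z_def m_def apc_w_eq[symmetric] apc_def using Q by (rule SUP_upper)
  then have YZ: "ennreal (m powr (- (1/s + 1/r))) * Y * Z \<le> ennreal w_const"
    by simp
  have exps: "m powr (-1/s0 - inv_exp r0) * a powr \<beta> * (a / (m * D)) powr (-\<beta>)
      = D powr \<beta> * (m powr (- (1/s + 1/r))) powr \<theta>"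
    by (rule apc_exponent_identity[OF m a(2) D apc_exponents])
  show ?thesis
  proof (cases "\<theta> = 0")
    case True
    have "ennreal (measure M Q powr (- inv_exp (ereal s0) - inv_exp r0))
        * Lp_norm (restrict_space M Q) (ereal s0) (\<lambda>x. ennreal (w x * weight_factor V x))
        * Lp_norm (restrict_space M Q) r0 (\<lambda>x. ennreal (1 / (w x * weight_factor V x)))
      \<le> ennreal (m powr (-1/s0 - inv_exp r0)) * ennreal (a powr \<beta>) * ennreal ((a / (m * D)) powr (-\<beta>))"
      unfolding m_def Lp_norm_restrict_weight_eq[OF True]
      using Lp_norm_restrict_inverse_weight_le_esssup[OF True] by (auto intro!: mult_left_mono)
    also have "\<dots> = ennreal (D powr \<beta> * w_const powr \<theta>)"
      using exps True m w_const_pos by (simp add: ennreal_mult[symmetric])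
    finally show ?thesis .
  next
    case False
    then have \<theta>: "0 < \<theta>"
      using \<theta>_nonneg by simp
    have "ennreal (measure M Q powr (- inv_exp (ereal s0) - inv_exp r0))
        * Lp_norm (restrict_space M Q) (ereal s0) (\<lambda>x. ennreal (w x * weight_factor V x))
        * Lp_norm (restrict_space M Q) r0 (\<lambda>x. ennreal (1 / (w x * weight_factor V x)))
      \<le> ennreal (m powr (-1/s0 - inv_exp r0)) * (ennreal (a powr \<beta>) * epowr Y \<theta>)
        * (ennreal ((a / (m * D)) powr (-\<beta>)) * epowr Z \<theta>)"
      unfolding m_def Y_def Z_def
      using Lp_norm_restrict_weight_le[OF \<theta>] Lp_norm_restrict_inverse_weight_le[OF \<theta>]
      by (auto intro!: mult_mono)
    also have "\<dots> = ennreal (D powr \<beta>) * epowr (ennreal (m powr (- (1/s + 1/r))) * Y * Z) \<theta>"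
      using exps m \<theta> by (simp add: epowr_mult ennreal_mult[symmetric] ac_simps)
    also have "\<dots> \<le> ennreal (D powr \<beta>) * epowr (ennreal w_const) \<theta>"
      using YZ \<theta> by (intro mult_left_mono epowr_mono) auto
    also have "\<dots> = ennreal (D powr \<beta> * w_const powr \<theta>)"
      using w_const_pos by (simp add: ennreal_mult)
    finally show ?thesis .
  qed
qed

end

lemma apc_weight_factor_le:
  assumes V [measurable]: "V \<in> borel_measurable M" and V_pos: "\<And>x. x \<in> space M \<Longrightarrow> 0 < V x"
    and A1: "A1_bounded M \<U> V D" and D: "0 < D"
  shows "apc M \<U> (ereal s0) r0 (\<lambda>x. w x * weight_factor V x) (\<lambda>x. w x * weight_factor V x)
    \<le> ennreal (D powr \<beta> * w_const powr \<theta>)"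
  unfolding apc_def
proof (rule SUP_least)
  fix Q assume Q: "Q \<in> \<U>"
  obtain a where "(\<integral>\<^sup>+y\<in>Q. ennreal (V y) \<partial>M) = ennreal a" "0 < a"
    "AE x in restrict_space M Q. a / (measure M Q * D) \<le> V x"
    using A1_bounded_average_lower_bound[OF basis V V_pos A1 D Q] by blast
  from apc_term_weight_factor_le[OF V V_pos D Q this]
  show "ennreal (measure M Q powr (- inv_exp (ereal s0) - inv_exp r0))
     * Lp_norm (restrict_space M Q) (ereal s0) (\<lambda>x. ennreal (w x * weight_factor V x))
     * Lp_norm (restrict_space M Q) r0 (\<lambda>x. ennreal (1 / (w x * weight_factor V x)))
   \<le> ennreal (D powr \<beta> * w_const powr \<theta>)" .
qed

lemma extrapolation_const_eq:
  assumes "1 < \<kappa>"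
  shows "(\<kappa> / (\<kappa> - 1) * maxop_const) powr \<beta> * w_const powr \<theta> = extrapolation_const \<kappa>"
proof -
  define K where "K = \<kappa> / (\<kappa> - 1) * c (ereal \<tau>)"
  have "0 \<le> K"
    using assms c_ge[of "ereal \<tau>"] \<tau>_gt_1 by (simp add: K_def)
  have "(\<kappa> / (\<kappa> - 1) * maxop_const) powr \<beta> = (K * w_const powr s) powr \<beta>"
    by (simp only: K_def maxop_const_def mult.assoc)
  also have "\<dots> = K powr \<beta> * w_const powr (s * \<beta>)"
    using \<open>0 \<le> K\<close> by (simp add: powr_mult powr_powr)
  finally show ?thesis
    using w_const_pos by (simp add: extrapolation_const_def K_def s_div_s0 powr_add mult.assoc)
qed

lemma exists_weight_factor:
  assumes u [measurable]: "u \<in> borel_measurable M" and u_nonneg: "\<And>x. x \<in> space M \<Longrightarrow> 0 \<le> u x"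
    and u_pos: "0 < emeasure M {x\<in>space M. u x \<noteq> 0}"
    and u_fin: "Lp_norm M (ereal (1/\<delta>)) (\<lambda>x. ennreal (u x)) < \<top>"
    and \<kappa>: "1 < \<kappa>"
  obtains U where "U \<in> borel_measurable M" "\<And>x. x \<in> space M \<Longrightarrow> 0 < U x" "AE x in M. u x \<le> U x"
    "Lp_norm M (ereal (1/\<delta>)) (\<lambda>x. ennreal (U x)) \<le> ennreal (\<kappa> powr \<beta>) * Lp_norm M (ereal (1/\<delta>)) (\<lambda>x. ennreal (u x))"
    "apc M \<U> (ereal s0) r0 (\<lambda>x. w x * U x) (\<lambda>x. w x * U x) \<le> ennreal (extrapolation_const \<kappa>)"
proof -
  let ?H = "weight_factor_inv u"
  note H_norm = Lp_norm_weight_factor_inv[OF u_nonneg]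
  have "0 \<le> ?H x" for x
    by (simp add: weight_factor_inv_def)
  then interpret rubio_de_francia_setting M \<U> w_dual \<tau> maxop_const ?H
    using basis w_dual_weight \<tau>_gt_1 maxop_const_pos maxop_norm_w_dual_le u_fin
    by unfold_locales (simp_all add: H_norm)
  have "{x\<in>space M. ?H x \<noteq> 0} = {x\<in>space M. u x \<noteq> 0}"
    using u_nonneg weight_factor_inv_eq_0_iff by blast
  then obtain V where V [measurable]: "V \<in> borel_measurable M" and V_pos: "\<And>x. x \<in> space M \<Longrightarrow> 0 < V x"
    and H_le_V: "AE x in M. ?H x \<le> V x"
    and V_norm: "Lp_norm M (ereal \<tau>) (\<lambda>x. ennreal (V x * w_dual x)) \<le> ennreal \<kappa> * Lp_norm M (ereal \<tau>) (\<lambda>x. ennreal (?H x * w_dual x))"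
    and V_A1: "A1_bounded M \<U> V (\<kappa> / (\<kappa> - 1) * maxop_const)"
    using exists_A1_majorant[OF \<kappa>] u_pos by auto
  show ?thesis
  proof
    show "weight_factor V \<in> borel_measurable M"
      by measurable
    show "0 < weight_factor V x" if "x \<in> space M" for x
      using V_pos[OF that] w_pos[OF that] by (simp add: weight_factor_def)
    show "AE x in M. u x \<le> weight_factor V x"
      using H_le_V AE_space by eventually_elim (use u_nonneg le_weight_factor in blast)
    have "Lp_norm M (ereal (1/\<delta>)) (\<lambda>x. ennreal (weight_factor V x))
        = epowr (Lp_norm M (ereal \<tau>) (\<lambda>x. ennreal (V x * w_dual x))) \<beta>"
      using V_pos by (rule Lp_norm_weight_factor)
    also have "\<dots> \<le> epowr (ennreal \<kappa> * epowr (Lp_norm M (ereal (1/\<delta>)) (\<lambda>x. ennreal (u x))) (1/\<beta>)) \<beta>"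
      using V_norm \<beta>_pos by (intro epowr_mono) (auto simp: H_norm)
    also have "\<dots> = ennreal (\<kappa> powr \<beta>) * Lp_norm M (ereal (1/\<delta>)) (\<lambda>x. ennreal (u x))"
      using \<beta>_pos \<kappa> by (simp add: epowr_mult epowr_epowr)
    finally show "Lp_norm M (ereal (1/\<delta>)) (\<lambda>x. ennreal (weight_factor V x))
        \<le> ennreal (\<kappa> powr \<beta>) * Lp_norm M (ereal (1/\<delta>)) (\<lambda>x. ennreal (u x))" .
    show "apc M \<U> (ereal s0) r0 (\<lambda>x. w x * weight_factor V x) (\<lambda>x. w x * weight_factor V x)
        \<le> ennreal (extrapolation_const \<kappa>)"
      using apc_weight_factor_le[OF V V_pos V_A1] \<kappa> maxop_const_pos extrapolation_const_eq[OF \<kappa>]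
      by simp
  qed
qed

end

section \<open>Extrapolation\<close>

locale extrapolation_problem = extrapolation_setting M \<U> s r s0 r0 w c
  for M :: "'a measure" and \<U> s r s0 r0 w c +
  fixes p q :: ereal and p0 q0 :: real
    and V :: "'v set" and S T :: "'v \<Rightarrow> 'a \<Rightarrow> real" and \<phi> :: "real \<Rightarrow> real"
  assumes sf: "sigma_finite_measure M"
    and p0_pos: "0 < p0" and q0_pos: "0 < q0" and p_pos: "0 < p" and q_pos: "0 < q"
    and exps_q: "inv_exp q - 1 / q0 = inv_exp p - 1 / p0"
    and exps_p: "inv_exp p - 1 / p0 = 1 / s - 1 / s0"
    and S_meas: "\<And>f. f \<in> V \<Longrightarrow> S f \<in> borel_measurable M"
    and T_meas: "\<And>f w0. is_weight M w0 \<Longrightarrow> apc M \<U> (ereal s0) r0 w0 w0 < \<top> \<Longrightarrow>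
        f \<in> V \<Longrightarrow> S f \<in> Lpw M (ereal p0) w0 \<Longrightarrow> T f \<in> borel_measurable M"
    and \<phi>_mono: "mono \<phi>"
    and T_bound: "\<And>f w0. is_weight M w0 \<Longrightarrow> apc M \<U> (ereal s0) r0 w0 w0 < \<top> \<Longrightarrow>
        f \<in> V \<Longrightarrow> S f \<in> Lpw M (ereal p0) w0 \<Longrightarrow>
        enn2ereal (wnorm M (ereal q0) w0 (T f))
          \<le> ereal (\<phi> (enn2real (apc M \<U> (ereal s0) r0 w0 w0))) * enn2ereal (wnorm M (ereal p0) w0 (S f))"
begin

lemma inv_exp_p: "inv_exp p = 1/p0 - \<delta>"
  using exps_p s0_eq by simp

lemma inv_exp_q: "inv_exp q = 1/q0 - \<delta>"
  using exps_q inv_exp_p by simp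

lemma exists_admissible_weight:
  assumes f: "f \<in> V" "S f \<in> Lpw M p w"
    and u [measurable]: "u \<in> borel_measurable M" and u_nonneg: "\<And>x. x \<in> space M \<Longrightarrow> 0 \<le> u x"
    and u_pos: "0 < emeasure M {x\<in>space M. u x \<noteq> 0}"
    and u_fin: "Lp_norm M (ereal (1/\<delta>)) (\<lambda>x. ennreal (u x)) < \<top>"
    and \<kappa>: "1 < \<kappa>"
  obtains U where "is_weight M (\<lambda>x. w x * U x)" "AE x in M. u x \<le> U x"
    "apc M \<U> (ereal s0) r0 (\<lambda>x. w x * U x) (\<lambda>x. w x * U x) \<le> ennreal (extrapolation_const \<kappa>)"
    "S f \<in> Lpw M (ereal p0) (\<lambda>x. w x * U x)"
    "wnorm M (ereal p0) (\<lambda>x. w x * U x) (S f)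
       \<le> wnorm M p w (S f) * (ennreal (\<kappa> powr \<beta>) * Lp_norm M (ereal (1/\<delta>)) (\<lambda>x. ennreal (u x)))"
proof -
  have [measurable]: "S f \<in> borel_measurable M"
    using S_meas f(1) .
  obtain U where [measurable]: "U \<in> borel_measurable M" and U_pos: "\<And>x. x \<in> space M \<Longrightarrow> 0 < U x"
    and u_le_U: "AE x in M. u x \<le> U x"
    and U_norm: "Lp_norm M (ereal (1/\<delta>)) (\<lambda>x. ennreal (U x)) \<le> ennreal (\<kappa> powr \<beta>) * Lp_norm M (ereal (1/\<delta>)) (\<lambda>x. ennreal (u x))"
    and apc_le: "apc M \<U> (ereal s0) r0 (\<lambda>x. w x * U x) (\<lambda>x. w x * U x) \<le> ennreal (extrapolation_const \<kappa>)"
    using exists_weight_factor[OF u u_nonneg u_pos u_fin \<kappa>] by blast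
  have "wnorm M (ereal p0) (\<lambda>x. w x * U x) (S f) \<le> wnorm M p w (S f) * Lp_norm M (ereal (1/\<delta>)) (\<lambda>x. ennreal (U x))"
    using w_pos U_pos p0_pos p_pos \<delta>_pos inv_exp_p by (intro wnorm_mult_le) (auto simp: less_imp_le)
  also have "\<dots> \<le> wnorm M p w (S f) * (ennreal (\<kappa> powr \<beta>) * Lp_norm M (ereal (1/\<delta>)) (\<lambda>x. ennreal (u x)))"
    using U_norm by (rule mult_left_mono) simp
  finally have wnorm_le: "wnorm M (ereal p0) (\<lambda>x. w x * U x) (S f) \<le> \<dots>" .
  moreover have "\<dots> < \<top>"
    using f(2) u_fin by (simp add: Lpw_def ennreal_mult_less_top)
  ultimately have "S f \<in> Lpw M (ereal p0) (\<lambda>x. w x * U x)"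
    by (simp add: Lpw_def)
  moreover have "is_weight M (\<lambda>x. w x * U x)"
    using w_pos U_pos by (simp add: is_weight_def)
  ultimately show ?thesis
    using that u_le_U apc_le wnorm_le by blast
qed

lemma exists_admissible_weight_le:
  assumes f: "f \<in> V" "S f \<in> Lpw M p w" and \<kappa>: "1 < \<kappa>"
  obtains U where "is_weight M (\<lambda>x. w x * U x)"
    "apc M \<U> (ereal s0) r0 (\<lambda>x. w x * U x) (\<lambda>x. w x * U x) \<le> ennreal (extrapolation_const \<kappa>)"
    "S f \<in> Lpw M (ereal p0) (\<lambda>x. w x * U x)"
proof -
  \<comment> \<open>any nonzero \<open>u\<close> will do; take the indicator of a basis set\<close>
  obtain x where "x \<in> space M"
    using nonempty by auto
  then obtain Q where Q: "Q \<in> \<U>"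
    using basis unfolding is_basis_def by blast
  have Q_sets: "Q \<in> sets M"
    using is_basis_sets[OF basis Q] .
  have "{x\<in>space M. indicator Q x \<noteq> (0::real)} = Q"
    using sets.sets_into_space[OF Q_sets] by (auto simp: indicator_def)
  then have pos: "0 < emeasure M {x\<in>space M. indicator Q x \<noteq> (0::real)}"
    using is_basis_emeasure_pos[OF basis Q] by simp
  have fin: "Lp_norm M (ereal (1/\<delta>)) (\<lambda>x. ennreal (indicator Q x)) < \<top>"
    using Lp_norm_indicator[OF Q_sets, of "1/\<delta>"] \<delta>_pos is_basis_emeasure[OF basis Q] by simp
  show ?thesis
    using exists_admissible_weight[OF f borel_measurable_indicator[OF Q_sets] _ pos fin \<kappa>] that
    by auto
qed

lemma domain_subset:
  assumes "f \<in> V" "S f \<in> Lpw M p w"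
  shows "\<exists>w0. is_weight M w0 \<and> apc M \<U> (ereal s0) r0 w0 w0 < \<top> \<and> S f \<in> Lpw M (ereal p0) w0"
proof -
  obtain U where "is_weight M (\<lambda>x. w x * U x)"
    "apc M \<U> (ereal s0) r0 (\<lambda>x. w x * U x) (\<lambda>x. w x * U x) \<le> ennreal (extrapolation_const 2)"
    "S f \<in> Lpw M (ereal p0) (\<lambda>x. w x * U x)"
    using exists_admissible_weight_le[OF assms, of 2] by auto
  then show ?thesis
    by (intro exI[of _ "\<lambda>x. w x * U x"]) (auto intro: le_less_trans)
qed

lemma T_measurable:
  assumes "f \<in> V" "S f \<in> Lpw M p w"
  shows "T f \<in> borel_measurable M"
  using domain_subset[OF assms] T_meas assms(1) by blast

lemma T_bound_le:
  assumes w0: "is_weight M w0" and apc_le: "apc M \<U> (ereal s0) r0 w0 w0 \<le> ennreal X"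
    and X: "0 \<le> X" and \<phi>X: "0 \<le> \<phi> X"
    and f: "f \<in> V" "S f \<in> Lpw M (ereal p0) w0"
  shows "wnorm M (ereal q0) w0 (T f) \<le> ennreal (\<phi> X) * wnorm M (ereal p0) w0 (S f)"
proof -
  have "apc M \<U> (ereal s0) r0 w0 w0 < \<top>"
    using apc_le by (simp add: le_less_trans)
  then have "enn2ereal (wnorm M (ereal q0) w0 (T f))
      \<le> ereal (\<phi> (enn2real (apc M \<U> (ereal s0) r0 w0 w0))) * enn2ereal (wnorm M (ereal p0) w0 (S f))"
    using T_bound[OF w0 _ f] by blast
  also have "\<dots> \<le> ereal (\<phi> X) * enn2ereal (wnorm M (ereal p0) w0 (S f))"
    using enn2real_mono[OF apc_le] X by (intro ereal_mult_right_mono) (auto intro: monoD[OF \<phi>_mono])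
  also have "\<dots> = enn2ereal (ennreal (\<phi> X) * wnorm M (ereal p0) w0 (S f))"
    using \<phi>X by (simp add: times_ennreal.rep_eq)
  finally show ?thesis
    by (simp add: less_eq_ennreal.rep_eq)
qed

lemma Lp_norm_T_mult_le:
  assumes f: "f \<in> V" "S f \<in> Lpw M p w" and \<kappa>: "1 < \<kappa>" and \<phi>X: "0 \<le> \<phi> (extrapolation_const \<kappa>)"
    and u [measurable]: "u \<in> borel_measurable M" and u_nonneg: "\<And>x. x \<in> space M \<Longrightarrow> 0 \<le> u x"
    and u_norm: "Lp_norm M (ereal (1/\<delta>)) (\<lambda>x. ennreal (u x)) \<le> 1"
  shows "Lp_norm M (ereal q0) (\<lambda>x. ennreal (\<bar>T f x\<bar> * w x * u x))
    \<le> ennreal (\<kappa> powr \<beta> * \<phi> (extrapolation_const \<kappa>)) * wnorm M p w (S f)"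
proof (cases "0 < emeasure M {x\<in>space M. u x \<noteq> 0}")
  case False
  then have "AE x in M. u x = 0"
    by (subst AE_iff_measurable[OF _ refl]) auto
  then have "Lp_norm M (ereal q0) (\<lambda>x. ennreal (\<bar>T f x\<bar> * w x * u x)) = 0"
    using q0_pos T_measurable[OF f] by (intro Lp_norm_eq_0_if_AE) (auto elim!: eventually_mono)
  then show ?thesis
    by simp
next
  case True
  let ?X = "extrapolation_const \<kappa>"
  obtain U where w0: "is_weight M (\<lambda>x. w x * U x)" and u_le_U: "AE x in M. u x \<le> U x"
    and apc_le: "apc M \<U> (ereal s0) r0 (\<lambda>x. w x * U x) (\<lambda>x. w x * U x) \<le> ennreal ?X"
    and S_in: "S f \<in> Lpw M (ereal p0) (\<lambda>x. w x * U x)"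
    and S_le: "wnorm M (ereal p0) (\<lambda>x. w x * U x) (S f)
      \<le> wnorm M p w (S f) * (ennreal (\<kappa> powr \<beta>) * Lp_norm M (ereal (1/\<delta>)) (\<lambda>x. ennreal (u x)))"
    using exists_admissible_weight[OF f u u_nonneg True _ \<kappa>] u_norm by (auto simp: le_less_trans)
  have "Lp_norm M (ereal q0) (\<lambda>x. ennreal (\<bar>T f x\<bar> * w x * u x)) \<le> wnorm M (ereal q0) (\<lambda>x. w x * U x) (T f)"
    unfolding wnorm_def
  proof (intro Lp_norm_mono_AE)
    show "AE x in M. ennreal (\<bar>T f x\<bar> * w x * u x) \<le> ennreal (\<bar>T f x\<bar> * (w x * U x))"
      using u_le_U AE_space
      by eventually_elim (use w_pos in \<open>auto simp: mult.assoc less_imp_le intro!: ennreal_leI mult_left_mono\<close>)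
  qed (use q0_pos in simp)
  also have "\<dots> \<le> ennreal (\<phi> ?X) * wnorm M (ereal p0) (\<lambda>x. w x * U x) (S f)"
    using T_bound_le[OF w0 apc_le _ \<phi>X f(1) S_in] \<kappa> by (simp add: extrapolation_const_def)
  also have "\<dots> \<le> ennreal (\<phi> ?X) * (wnorm M p w (S f) * (ennreal (\<kappa> powr \<beta>) * 1))"
    using S_le u_norm by (intro mult_left_mono order_trans[OF S_le]) auto
  also have "\<dots> = ennreal (\<kappa> powr \<beta> * \<phi> ?X) * wnorm M p w (S f)"
    using \<phi>X by (simp add: ennreal_mult ac_simps)
  finally show ?thesis .
qed

text \<open>Duality: \<open>\<parallel>T f\<parallel>\<^bsub>L\<^sup>q\<^sub>w\<^esub>\<close> is approached by \<open>\<parallel>T f w u\<parallel>\<^bsub>q\<^sub>0\<^esub>\<close> with \<open>\<parallel>u\<parallel>\<^bsub>1/\<delta>\<^esub> \<le> 1\<close>.\<close>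
lemma wnorm_T_le:
  assumes f: "f \<in> V" "S f \<in> Lpw M p w" and \<kappa>: "1 < \<kappa>"
    and \<phi>X: "0 \<le> \<phi> (extrapolation_const \<kappa>)"
  shows "wnorm M q w (T f) \<le> ennreal (\<kappa> powr \<beta> * \<phi> (extrapolation_const \<kappa>)) * wnorm M p w (S f)"
proof (rule dense_le)
  fix lv assume lv: "lv < wnorm M q w (T f)"
  have [measurable]: "T f \<in> borel_measurable M"
    using T_measurable[OF f] .
  obtain u where "u \<in> borel_measurable M" "\<And>x. x \<in> space M \<Longrightarrow> 0 \<le> u x"
    "Lp_norm M (ereal (1/\<delta>)) (\<lambda>x. ennreal (u x)) \<le> 1"
    and lv_le: "lv \<le> Lp_norm M (ereal q0) (\<lambda>x. ennreal (\<bar>T f x\<bar> * w x * u x))"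
    using exists_norming_function[OF sf _ _ q_pos q0_pos \<delta>_pos inv_exp_q, of "\<lambda>x. \<bar>T f x\<bar> * w x"] lv w_pos
    unfolding wnorm_def by (auto simp: less_imp_le)
  with Lp_norm_T_mult_le[OF f \<kappa> \<phi>X] show "lv \<le> ennreal (\<kappa> powr \<beta> * \<phi> (extrapolation_const \<kappa>)) * wnorm M p w (S f)"
    by (blast intro: order_trans)
qed

lemma wnorm_eq_0_if_\<phi>_neg:
  assumes f: "f \<in> V" "S f \<in> Lpw M p w" and \<kappa>: "1 < \<kappa>"
    and \<phi>X: "\<phi> (extrapolation_const \<kappa>) < 0"
  shows "wnorm M q w (T f) = 0" "wnorm M p w (S f) = 0"
proof -
  let ?X = "extrapolation_const \<kappa>"
  have [measurable]: "T f \<in> borel_measurable M" "S f \<in> borel_measurable M"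
    using T_measurable[OF f] S_meas[OF f(1)] .
  obtain U where w0: "is_weight M (\<lambda>x. w x * U x)"
    and apc_le: "apc M \<U> (ereal s0) r0 (\<lambda>x. w x * U x) (\<lambda>x. w x * U x) \<le> ennreal ?X"
    and S_in: "S f \<in> Lpw M (ereal p0) (\<lambda>x. w x * U x)"
    using exists_admissible_weight_le[OF f \<kappa>] by blast
  have "0 \<le> ?X"
    by (simp add: extrapolation_const_def)
  then have "enn2real (apc M \<U> (ereal s0) r0 (\<lambda>x. w x * U x) (\<lambda>x. w x * U x)) \<le> ?X"
    using enn2real_mono[OF apc_le] by simp
  then have "\<phi> (enn2real (apc M \<U> (ereal s0) r0 (\<lambda>x. w x * U x) (\<lambda>x. w x * U x))) < 0"
    using \<phi>X monoD[OF \<phi>_mono] by (meson le_less_trans)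
  moreover have "apc M \<U> (ereal s0) r0 (\<lambda>x. w x * U x) (\<lambda>x. w x * U x) < \<top>"
    using apc_le by (simp add: le_less_trans)
  ultimately have T0: "wnorm M (ereal q0) (\<lambda>x. w x * U x) (T f) = 0"
    and S0: "wnorm M (ereal p0) (\<lambda>x. w x * U x) (S f) = 0"
    using enn2ereal_le_neg_mult T_bound[OF w0 _ f(1) S_in] by blast+
  show "wnorm M q w (T f) = 0"
    using wnorm_eq_0_imp_AE[OF T0 w0 _ q0_pos] by (intro wnorm_eq_0_if_AE w_weight q_pos) auto
  show "wnorm M p w (S f) = 0"
    using wnorm_eq_0_imp_AE[OF S0 w0 _ p0_pos] by (intro wnorm_eq_0_if_AE w_weight p_pos) auto
qed

lemma extrapolated_bound:
  assumes f: "f \<in> V" "S f \<in> Lpw M p w" and \<kappa>: "1 < \<kappa>"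
  shows "enn2ereal (wnorm M q w (T f))
    \<le> ereal (\<kappa> powr \<beta> * \<phi> (extrapolation_const \<kappa>)) * enn2ereal (wnorm M p w (S f))"
proof (cases "\<phi> (extrapolation_const \<kappa>) < 0")
  case True
  then show ?thesis
    using wnorm_eq_0_if_\<phi>_neg[OF f \<kappa>] by (simp add: zero_ennreal.rep_eq)
next
  case False
  then have "enn2ereal (wnorm M q w (T f))
      \<le> enn2ereal (ennreal (\<kappa> powr \<beta> * \<phi> (extrapolation_const \<kappa>)) * wnorm M p w (S f))"
    using wnorm_T_le[OF f \<kappa>] by (simp add: less_eq_ennreal.rep_eq)
  then show ?thesis
    using False by (simp add: times_ennreal.rep_eq)
qed

end

theorem theorem1p1:
  fixes M :: "'a measure" and \<U> :: "'a set set"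
    and q0 p0 s0 s r :: real and r0 q p :: ereal
    and w :: "'a \<Rightarrow> real"
    and c :: "ereal \<Rightarrow> real"
    and V :: "'v set" and S T :: "'v \<Rightarrow> 'a \<Rightarrow> real" and \<phi> :: "real \<Rightarrow> real"
  assumes sf: "sigma_finite_measure M"
    and basis: "is_basis M \<U>"
    and pos: "0 < q0" "0 < p0" "0 < s0" "0 < s" "0 < r" "0 < r0" "0 < q" "0 < p"
    and rel1: "inv_exp q - 1 / q0 = inv_exp p - 1 / p0"
    and rel2: "inv_exp p - 1 / p0 = 1 / s - 1 / s0"
    and rel3: "1 / s - 1 / s0 = inv_exp r0 - 1 / r"
    and rel4: "inv_exp r0 - 1 / r < 0"
    and w_weight: "is_weight M w"
    and w_fin: "apc M \<U> (ereal s) (ereal r) w w < \<top>"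
    and c_ge: "\<And>t. 1 < t \<Longrightarrow> 1 \<le> c t"
    and max_bd: "\<And>t v. 1 < t \<Longrightarrow> is_weight M v \<Longrightarrow>
        maxop_norm M \<U> t v \<le> ennreal (c t) * epowr (apc_p M \<U> t v) (real_of_ereal (conj_exp t))"
    and S_meas: "\<And>f. f \<in> V \<Longrightarrow> S f \<in> borel_measurable M"
    and T_meas: "\<And>f w0. is_weight M w0 \<Longrightarrow> apc M \<U> (ereal s0) r0 w0 w0 < \<top> \<Longrightarrow>
        f \<in> V \<Longrightarrow> S f \<in> Lpw M (ereal p0) w0 \<Longrightarrow> T f \<in> borel_measurable M"
    and phi_mono: "mono \<phi>"
    and T_bd: "\<And>f w0. is_weight M w0 \<Longrightarrow> apc M \<U> (ereal s0) r0 w0 w0 < \<top> \<Longrightarrow>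
        f \<in> V \<Longrightarrow> S f \<in> Lpw M (ereal p0) w0 \<Longrightarrow>
        enn2ereal (wnorm M (ereal q0) w0 (T f))
          \<le> ereal (\<phi> (enn2real (apc M \<U> (ereal s0) r0 w0 w0)))
             * enn2ereal (wnorm M (ereal p0) w0 (S f))"
  shows "{f \<in> V. S f \<in> Lpw M p w}
           \<subseteq> {f \<in> V. \<exists>w0. is_weight M w0 \<and> apc M \<U> (ereal s0) r0 w0 w0 < \<top>
                            \<and> S f \<in> Lpw M (ereal p0) w0}
       \<and> (\<forall>\<kappa>::real. \<forall>f. 1 < \<kappa> \<longrightarrow> f \<in> V \<longrightarrow> S f \<in> Lpw M p w \<longrightarrow>
           (let t = (1 / s + 1 / r) / (1 / r);
                \<beta> = (1 / s + 1 / r) * (1 / r - inv_exp r0) / (1 / r);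
                \<kappa>' = \<kappa> / (\<kappa> - 1)
            in enn2ereal (wnorm M q w (T f))
               \<le> ereal (\<kappa> powr \<beta> * \<phi> ((\<kappa>' * c (ereal t)) powr \<beta>
                       * enn2real (apc M \<U> (ereal s) (ereal r) w w) powr (s / s0)))
                 * enn2ereal (wnorm M p w (S f))))"
proof (cases "space M = {}")
  case True
  \<comment> \<open>all norms vanish and the constant weight \<open>1\<close> is admissible\<close>
  have "apc M \<U> a b v v = 0" for a b v
    using is_basis_space_empty[OF basis True] by (simp add: apc_def bot_ennreal)
  moreover have "is_weight M (\<lambda>_. 1)"
    by (simp add: is_weight_def)
  ultimately show ?thesis
    using True S_meas pos by (auto simp: Let_def Lpw_def wnorm_space_empty zero_ennreal.rep_eq)
next
  case False
  interpret extrapolation_problem M \<U> s r s0 r0 w c p q p0 q0 V S T \<phi>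
    using sf basis pos rel1 rel2 rel3 rel4 w_weight w_fin c_ge max_bd S_meas T_meas phi_mono T_bd False
    by (intro extrapolation_problem.intro extrapolation_setting.intro extrapolation_problem_axioms.intro) auto
  show ?thesis
    using domain_subset extrapolated_bound
    unfolding Let_def extrapolation_const_def w_const_def \<tau>_def \<beta>_def by auto
qed

end
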